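(* Let $X_1,\dots,X_n,Y_1,\dots,Y_n$ be operators in a complex Hilbert space $\mathcal{H}$, each Hermitian or skew-Hermitian, defined on a common invariant domain $D$, such that on $D$: $[X_i,X_j]=[Y_i,Y_j]=0$ for all $i,j\in\{1,\dots,n\}$, $[X_i,Y_j]=0$ for all $i\neq j$, and $[X_i,Y_i]=c_iI$ with $c_i\in\mathbb{C}\setminus\{0\}$ for all $i\in\{1,\dots,n\}$. Let $m^{(1)},\dots,m^{(n)},q^{(1)},\dots,q^{(n)}$ be sequences of positive numbers satisfying (A0), (A1), (A2), and assume that for every $i\in\{1,\dots,n\}$ the pair $(m^{(i)},q^{(i)})$ satisfies (A3). Put $\mathbf{X}=(X_1,\dots,X_n)$, $\mathbf{Y}=(Y_1,\dots,Y_n)$, $\mathbf{m}=(m^{(1)},\dots,m^{(n)})$, $\mathbf{q}=(q^{(1)},\dots,q^{(n)})$. Then for $u\in D$ the following are equivalent: (i) $u\in\mathcal{S}_{(m^{(1)},\dots,m^{(n)},q^{(1)},\dots,q^{(n)})}(X_1,\dots,X_n,Y_1,\dots,Y_n)$; (ii) $u\in\mathcal{S}_{\mathbf{m}}(\mathbf{X})\cap\mathcal{S}_{\mathbf{q}}(\mathbf{Y})$; (iii) $u\in\left(\bigcap_{i=1}^n\mathcal{S}_{m^{(i)}}(X_i)\right)\cap\left(\bigcap_{i=1}^n\mathcal{S}_{q^{(i)}}(Y_i)\right)$.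
   Context: A common invariant domain $D$ means $D$ is contained in the domain of each operator and is mapped into itself by each operator. Notation: for $N\ge1$, $M(N)=\bigcup_{k\ge1}\{1,\dots,N\}^k$; for $\alpha=(i_1,\dots,i_k)$, $|\alpha|=k$, $|\alpha|_j=\mathrm{card}\{l:i_l=j\}$. For operators $\mathbf{Z}=(Z_1,\dots,Z_N)$, $\mathbf{Z}_\alpha=Z_{i_1}\cdots Z_{i_k}$ and $C^\infty(\mathbf{Z})=\{u: u\in\mathrm{Dom}(\mathbf{Z}_\alpha)\ \forall\alpha\in M(N)\}$. For sequences $\mathbf{p}=(p^{(1)},\dots,p^{(N)})$ of positive reals, $\mathbf{p}_\alpha=p^{(1)}_{|\alpha|_1}\cdots p^{(N)}_{|\alpha|_N}$ and $\mathcal{S}_{\mathbf{p}}(\mathbf{Z})=\{u\in C^\infty(\mathbf{Z}):\exists A,C>0,\ \|\mathbf{Z}_\alpha u\|\le CA^{|\alpha|}\mathbf{p}_\alpha\ \forall\alpha\in M(N)\}$ (for a single operator $Z$ and sequence $p$: $\|Z^ku\|\le CA^kp_k$ for all $k\ge1$). Conditions on a sequence $m$: (A0) $m_0=m_1=1$; (A1) $m_p^2\le m_{p-1}m_{p+1}$ for $p\ge1$; (A2) there is $H>0$ (common to all sequences considered) with $m_{p+q}\le H^{p+q}m_pm_q$ for all $p,q\in\mathbb{N}$. A pair $(m,q)$ satisfies (A3) if there is $L\ge1$ with $p\,m_{p-1}q_{p-1}\le L\,m_pq_p$ for all $p\ge1$. *)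

theory Defs
  imports "HOL-Analysis.Analysis"
begin

class complex_vector = real_vector +
  fixes scaleC :: "complex \<Rightarrow> 'a \<Rightarrow> 'a" (infixr \<open>*\<^sub>C\<close> 75)
  assumes scaleC_add_right: "a *\<^sub>C (x + y) = a *\<^sub>C x + a *\<^sub>C y"
    and scaleC_add_left: "(a + b) *\<^sub>C x = a *\<^sub>C x + b *\<^sub>C x"
    and scaleC_scaleC: "a *\<^sub>C (b *\<^sub>C x) = (a * b) *\<^sub>C x"
    and scaleC_one: "1 *\<^sub>C x = x"
    and scaleR_scaleC: "scaleR r x = complex_of_real r *\<^sub>C x"

class complex_inner = complex_vector + real_normed_vector +
  fixes cinner :: "'a \<Rightarrow> 'a \<Rightarrow> complex"
  assumes cinner_commute: "cinner x y = cnj (cinner y x)"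
    and cinner_add_left: "cinner (x + y) z = cinner x z + cinner y z"
    and cinner_scaleC_left: "cinner (r *\<^sub>C x) y = cnj r * cinner x y"
    and cinner_self_real_nonneg: "Im (cinner x x) = 0 \<and> Re (cinner x x) \<ge> 0"
    and cinner_eq_zero_iff: "cinner x x = 0 \<longleftrightarrow> x = 0"
    and norm_eq_sqrt_cinner: "norm x = sqrt (Re (cinner x x))"

class chilbert_space = complex_inner + complete_space

definition csubspace :: "'a::complex_vector set \<Rightarrow> bool" where
  "csubspace S \<longleftrightarrow> 0 \<in> S \<and> (\<forall>x\<in>S. \<forall>y\<in>S. x + y \<in> S) \<and> (\<forall>c. \<forall>x\<in>S. c *\<^sub>C x \<in> S)"

definition lin_op :: "'a::complex_vector set \<Rightarrow> ('a \<Rightarrow> 'a) \<Rightarrow> bool" where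
  "lin_op Dom Z \<longleftrightarrow> csubspace Dom \<and>
     (\<forall>x\<in>Dom. \<forall>y\<in>Dom. Z (x + y) = Z x + Z y) \<and> (\<forall>c. \<forall>x\<in>Dom. Z (c *\<^sub>C x) = c *\<^sub>C Z x)"

definition hermitian :: "'a::complex_inner set \<Rightarrow> ('a \<Rightarrow> 'a) \<Rightarrow> bool" where
  "hermitian Dom Z \<longleftrightarrow> (\<forall>u\<in>Dom. \<forall>v\<in>Dom. cinner (Z u) v = cinner u (Z v))"

definition skew_hermitian :: "'a::complex_inner set \<Rightarrow> ('a \<Rightarrow> 'a) \<Rightarrow> bool" where
  "skew_hermitian Dom Z \<longleftrightarrow> (\<forall>u\<in>Dom. \<forall>v\<in>Dom. cinner (Z u) v = - cinner u (Z v))"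

definition common_invariant_domain ::
    "'a::complex_vector set \<Rightarrow> nat set \<Rightarrow> (nat \<Rightarrow> 'a set) \<Rightarrow> (nat \<Rightarrow> 'a \<Rightarrow> 'a) \<Rightarrow> bool" where
  "common_invariant_domain D I Dom Z \<longleftrightarrow> csubspace D \<and> (\<forall>i\<in>I. D \<subseteq> Dom i \<and> Z i ` D \<subseteq> D)"

definition multi_indices :: "nat \<Rightarrow> nat list set" where
  "multi_indices N = {\<alpha>. \<alpha> \<noteq> [] \<and> set \<alpha> \<subseteq> {1..N}}"

definition count_idx :: "nat list \<Rightarrow> nat \<Rightarrow> nat" where
  "count_idx \<alpha> j = length (filter (\<lambda>i. i = j) \<alpha>)"

text \<open>Z_alpha = Z_{i1} ... Z_{ik} (the rightmost factor acts first).\<close>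
fun op_word :: "(nat \<Rightarrow> 'a \<Rightarrow> 'a) \<Rightarrow> nat list \<Rightarrow> 'a \<Rightarrow> 'a" where
  "op_word Z [] u = u"
| "op_word Z (i # \<alpha>) u = Z i (op_word Z \<alpha> u)"

fun in_dom_word :: "(nat \<Rightarrow> 'a set) \<Rightarrow> (nat \<Rightarrow> 'a \<Rightarrow> 'a) \<Rightarrow> nat list \<Rightarrow> 'a \<Rightarrow> bool" where
  "in_dom_word Dom Z [] u = True"
| "in_dom_word Dom Z (i # \<alpha>) u = (in_dom_word Dom Z \<alpha> u \<and> op_word Z \<alpha> u \<in> Dom i)"

definition C_infty :: "nat \<Rightarrow> (nat \<Rightarrow> 'a set) \<Rightarrow> (nat \<Rightarrow> 'a \<Rightarrow> 'a) \<Rightarrow> 'a set" where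
  "C_infty N Dom Z = {u. \<forall>\<alpha>\<in>multi_indices N. in_dom_word Dom Z \<alpha> u}"

definition p_word :: "nat \<Rightarrow> (nat \<Rightarrow> nat \<Rightarrow> real) \<Rightarrow> nat list \<Rightarrow> real" where
  "p_word N p \<alpha> = (\<Prod>j=1..N. p j (count_idx \<alpha> j))"

definition S_class :: "nat \<Rightarrow> (nat \<Rightarrow> 'a::real_normed_vector set) \<Rightarrow> (nat \<Rightarrow> 'a \<Rightarrow> 'a)
    \<Rightarrow> (nat \<Rightarrow> nat \<Rightarrow> real) \<Rightarrow> 'a set" where
  "S_class N Dom Z p = {u \<in> C_infty N Dom Z. \<exists>A>0. \<exists>C>0. \<forall>\<alpha>\<in>multi_indices N.
      norm (op_word Z \<alpha> u) \<le> C * A ^ length \<alpha> * p_word N p \<alpha>}"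

definition S_single :: "'a::real_normed_vector set \<Rightarrow> ('a \<Rightarrow> 'a) \<Rightarrow> (nat \<Rightarrow> real) \<Rightarrow> 'a set" where
  "S_single Dom Z p = {u. (\<forall>k. \<forall>j<k. (Z ^^ j) u \<in> Dom) \<and>
      (\<exists>A>0. \<exists>C>0. \<forall>k\<ge>1. norm ((Z ^^ k) u) \<le> C * A ^ k * p k)}"

definition cond_A0 :: "(nat \<Rightarrow> real) \<Rightarrow> bool" where
  "cond_A0 m \<longleftrightarrow> m 0 = 1 \<and> m 1 = 1"

definition cond_A1 :: "(nat \<Rightarrow> real) \<Rightarrow> bool" where
  "cond_A1 m \<longleftrightarrow> (\<forall>p\<ge>1. (m p)\<^sup>2 \<le> m (p - 1) * m (p + 1))"

definition cond_A2 :: "real \<Rightarrow> (nat \<Rightarrow> real) \<Rightarrow> bool" where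
  "cond_A2 H m \<longleftrightarrow> (\<forall>p q. m (p + q) \<le> H ^ (p + q) * m p * m q)"

definition cond_A3 :: "(nat \<Rightarrow> real) \<Rightarrow> (nat \<Rightarrow> real) \<Rightarrow> bool" where
  "cond_A3 m q \<longleftrightarrow> (\<exists>L\<ge>1. \<forall>p\<ge>1. real p * m (p - 1) * q (p - 1) \<le> L * m p * q p)"

definition join_tuple :: "nat \<Rightarrow> (nat \<Rightarrow> 'b) \<Rightarrow> (nat \<Rightarrow> 'b) \<Rightarrow> nat \<Rightarrow> 'b" where
  "join_tuple n F G i = (if i \<le> n then F i else G (i - n))"

end

theory Submission
  imports Defs
begin

text \<open>(i) \<open>\<Rightarrow>\<close> (ii) \<open>\<Rightarrow>\<close> (iii) only restrict the words that are estimated. For (iii) \<open>\<Rightarrow>\<close> (i),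
  consider first one canonical pair \<open>X = X\<^sub>i\<close>, \<open>Y = Y\<^sub>i\<close>. Moving the \<open>Y\<close>'s of a word to the right with
  \<open>[X, Y] = c\<close> writes it as a combination of the vectors \<open>X\<^sup>a Y\<^sup>b u\<close>; the factorials in the coefficients
  are absorbed by (A3) and the splitting \<open>m\<^sub>j m\<^sub>a\<^sub>-\<^sub>j \<le> m\<^sub>a\<close> follows from (A1). The needed bound on
  \<open>\<parallel>X\<^sup>a Y\<^sup>b u\<parallel>\<close> is itself obtained this way from \<open>\<parallel>X\<^sup>a Y\<^sup>b u\<parallel>\<^sup>2 = |\<langle>Y\<^sup>b X\<^sup>2\<^sup>a Y\<^sup>b u, u\<rangle>|\<close> and
  \<open>|\<langle>X\<^sup>a Y\<^sup>b u, u\<rangle>| \<le> \<parallel>Y\<^sup>b u\<parallel> \<parallel>X\<^sup>a u\<parallel>\<close>, with (A2) turning \<open>m\<^sub>2\<^sub>a\<close> into \<open>H\<^sup>2\<^sup>a m\<^sub>a\<^sup>2\<close>.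
  Different pairs commute, so for a word splitting as \<open>Z\<^sub>P Z\<^sub>Q\<close> Cauchy-Schwarz gives
  \<open>\<parallel>Z\<^sub>P Z\<^sub>Q u\<parallel>\<^sup>2 \<le> \<parallel>Z\<^sub>P\<^sup>* Z\<^sub>P u\<parallel> \<parallel>Z\<^sub>Q\<^sup>* Z\<^sub>Q u\<parallel>\<close>, and by (A2) again the bounds for the separate pairs
  combine into a bound for all words.\<close>

section \<open>Complex inner product spaces\<close>

lemma cinner_add_right: "cinner x (y + z) = cinner x y + cinner x z"
  by (metis cinner_add_left cinner_commute complex_cnj_add)

lemma cinner_scaleC_right: "cinner x (r *\<^sub>C y) = r * cinner x y"
  by (metis cinner_commute cinner_scaleC_left complex_cnj_cnj complex_cnj_mult)

lemma scaleC_zero_left [simp]: "0 *\<^sub>C x = 0"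
  using scaleC_add_left[of 0 0 x] by simp

lemma scaleC_minus_left: "(- r) *\<^sub>C x = - (r *\<^sub>C x)"
proof -
  have "- (r *\<^sub>C x) = (- 1 :: real) *\<^sub>R (r *\<^sub>C x)" by simp
  thus ?thesis by (simp add: scaleR_scaleC scaleC_scaleC)
qed

lemma norm_square_eq_Re_cinner: "(norm x)\<^sup>2 = Re (cinner x x)"
  using cinner_self_real_nonneg[of x] by (simp add: norm_eq_sqrt_cinner)

lemma cinner_self_eq_norm_square: "cinner x x = complex_of_real ((norm x)\<^sup>2)"
  using cinner_self_real_nonneg[of x] by (simp add: norm_square_eq_Re_cinner complex_eq_iff)

lemma norm_scaleC: "norm (r *\<^sub>C (x::'a::complex_inner)) = cmod r * norm x"
proof -
  have "cinner (r *\<^sub>C x) (r *\<^sub>C x) = cnj r * r * cinner x x"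
    by (simp add: cinner_scaleC_left cinner_scaleC_right mult_ac)
  hence "complex_of_real ((norm (r *\<^sub>C x))\<^sup>2) = cnj r * r * complex_of_real ((norm x)\<^sup>2)"
    by (simp only: cinner_self_eq_norm_square)
  also have "cnj r * r = complex_of_real ((cmod r)\<^sup>2)"
    by (metis complex_norm_square mult.commute)
  finally have "(norm (r *\<^sub>C x))\<^sup>2 = (cmod r * norm x)\<^sup>2"
    by (metis of_real_eq_iff of_real_mult power_mult_distrib)
  thus ?thesis by (simp add: power2_eq_iff_nonneg)
qed

lemma norm_add_square: "(norm (x + y))\<^sup>2 = (norm x)\<^sup>2 + 2 * Re (cinner x y) + (norm y)\<^sup>2"
proof -
  have "Re (cinner y x) = Re (cinner x y)"
    by (subst cinner_commute) simp
  thus ?thesis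
    by (simp add: norm_square_eq_Re_cinner cinner_add_left cinner_add_right)
qed

lemma Re_cinner_le_norm_mult: "Re (cinner x y) \<le> norm x * norm y"
proof -
  have "(norm (x + y))\<^sup>2 \<le> (norm x + norm y)\<^sup>2"
    by (simp add: norm_triangle_ineq power_mono)
  thus ?thesis by (simp add: norm_add_square power2_sum)
qed

lemma Cauchy_Schwarz_cinner: "cmod (cinner x y) \<le> norm x * norm y"
proof (cases "cinner x y = 0")
  case False
  define w where "w = cinner x y / complex_of_real (cmod (cinner x y))"
  have "cinner (w *\<^sub>C x) y = complex_of_real (cmod (cinner x y))"
    using False by (simp add: w_def cinner_scaleC_left complex_norm_square[symmetric]
        power2_eq_square divide_simps mult.commute)
  hence "cmod (cinner x y) \<le> norm (w *\<^sub>C x) * norm y"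
    by (metis Re_cinner_le_norm_mult Re_complex_of_real)
  moreover have "cmod w = 1" using False by (simp add: w_def norm_divide)
  ultimately show ?thesis by (simp add: norm_scaleC)
qed simp

lemma norm_cinner_commute: "cmod (cinner x y) = cmod (cinner y x)"
  by (subst cinner_commute) (simp only: complex_mod_cnj)

lemma norm_diff_scaleC_le: "norm (v - r *\<^sub>C w) \<le> norm v + cmod r * norm (w::'a::complex_inner)"
  using norm_triangle_ineq4[of v "r *\<^sub>C w"] by (simp add: norm_scaleC)

lemma norm_cinner_diff_scaleC_le:
  "cmod (cinner (v - r *\<^sub>C w) u) \<le> cmod (cinner v u) + cmod r * cmod (cinner w u)"
proof -
  have eq: "v - r *\<^sub>C w = v + (- r) *\<^sub>C w"
    by (simp only: diff_conv_add_uminus scaleC_minus_left)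
  have "cinner (v - r *\<^sub>C w) u = cinner v u + (- cnj r) * cinner w u"
    unfolding eq by (simp only: cinner_add_left cinner_scaleC_left complex_cnj_minus)
  thus ?thesis using norm_triangle_ineq[of "cinner v u" "(- cnj r) * cinner w u"] by (simp add: norm_mult)
qed

section \<open>Weight sequences\<close>

lemma cond_A1_mult_le:
  fixes m :: "nat \<Rightarrow> real"
  assumes pos: "\<And>k. m k > 0" and A0: "cond_A0 m" and A1: "cond_A1 m"
  shows "m a * m b \<le> m (a + b)"
proof -
  \<comment> \<open>(A1) says that the ratios \<open>m (k + 1) / m k\<close> increase.\<close>
  define r where "r k = m (Suc k) / m k" for k
  have r_Suc: "r k \<le> r (Suc k)" for k
  proof -
    have "(m (Suc k))\<^sup>2 \<le> m k * m (Suc (Suc k))"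
      using A1 unfolding cond_A1_def by (metis Suc_eq_plus1 diff_Suc_1 le_add2)
    thus ?thesis using pos[of k] pos[of "Suc k"]
      by (simp add: r_def divide_simps power2_eq_square mult.commute)
  qed
  have r_mono: "k \<le> k' \<Longrightarrow> r k \<le> r k'" for k k'
    by (induction k' rule: dec_induct) (auto intro: order_trans r_Suc)
  have r_nonneg: "r k \<ge> 0" for k
    using pos[of k] pos[of "Suc k"] by (simp add: r_def)
  have m_Suc: "m (Suc k) = m k * r k" for k
    using pos[of k] by (simp add: r_def)
  show ?thesis
  proof (induction b)
    case 0
    thus ?case using A0 by (simp add: cond_A0_def)
  next
    case (Suc b)
    have "m a * m (Suc b) = (m a * m b) * r b" by (simp add: m_Suc mult.assoc)
    also have "\<dots> \<le> m (a + b) * r (a + b)"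
      by (rule mult_mono[OF Suc.IH r_mono]) (use r_nonneg pos in \<open>auto simp: less_imp_le\<close>)
    also have "\<dots> = m (a + Suc b)" by (simp add: m_Suc)
    finally show ?case .
  qed
qed

lemma cond_A2_double: "cond_A2 H m \<Longrightarrow> m (2 * a) \<le> H ^ (2 * a) * (m a)\<^sup>2"
  unfolding cond_A2_def by (metis mult_2 mult.assoc power2_eq_square)

lemma cond_A2_ge_1:
  fixes m :: "nat \<Rightarrow> real"
  shows "cond_A2 H m \<Longrightarrow> cond_A0 m \<Longrightarrow> H \<ge> 1"
  unfolding cond_A2_def cond_A0_def by (metis add_0 mult.right_neutral power_one_right)

lemma fact_le_cond_A3:
  fixes m q :: "nat \<Rightarrow> real"
  assumes A0: "cond_A0 m" "cond_A0 q"
    and L: "L \<ge> 0" "\<forall>p\<ge>1. real p * m (p - 1) * q (p - 1) \<le> L * m p * q p"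
  shows "fact j \<le> L ^ j * m j * q j"
proof (induction j)
  case 0
  thus ?case using A0 by (simp add: cond_A0_def)
next
  case (Suc j)
  have "fact (Suc j) \<le> real (Suc j) * (L ^ j * m j * q j)"
    using Suc.IH by (simp add: mult_left_mono)
  also have "\<dots> = L ^ j * (real (Suc j) * m j * q j)" by (simp add: algebra_simps)
  also have "\<dots> \<le> L ^ j * (L * m (Suc j) * q (Suc j))"
    using L(2)[rule_format, of "Suc j"] L(1) by (intro mult_left_mono) auto
  finally show ?case by (simp add: algebra_simps)
qed

lemma cond_A3_fact_le:
  fixes m q :: "nat \<Rightarrow> real"
  assumes pos: "\<And>k. m k > 0" "\<And>k. q k > 0" and A0: "cond_A0 m" "cond_A0 q"
    and A3: "cond_A3 m q" and \<gamma>: "\<gamma> \<ge> 0"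
  obtains K where "K \<ge> 1" "\<And>j. fact j * \<gamma> ^ j \<le> K ^ j * m j * q j"
proof -
  obtain L where L: "L \<ge> 1" "\<forall>p\<ge>1. real p * m (p - 1) * q (p - 1) \<le> L * m p * q p"
    using A3 unfolding cond_A3_def by blast
  have "fact j * \<gamma> ^ j \<le> max 1 (\<gamma> * L) ^ j * m j * q j" for j
  proof -
    have "fact j * \<gamma> ^ j \<le> (L ^ j * m j * q j) * \<gamma> ^ j"
      using fact_le_cond_A3[OF A0] L \<gamma> by (intro mult_right_mono) auto
    also have "\<dots> = (\<gamma> * L) ^ j * m j * q j" by (simp add: power_mult_distrib algebra_simps)
    also have "\<dots> \<le> max 1 (\<gamma> * L) ^ j * m j * q j"
      using L \<gamma> pos(1)[of j] pos(2)[of j] by (intro mult_right_mono power_mono) auto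
    finally show ?thesis .
  qed
  thus thesis by (intro that[of "max 1 (\<gamma> * L)"]) auto
qed

lemma binomial_le_pow2_real: "real (n choose k) \<le> 2 ^ n"
proof -
  have "real (n choose k) \<le> real (2 ^ n)"
    using binomial_le_pow2[of n k] by (simp only: of_nat_le_iff)
  also have "\<dots> = 2 ^ n" by (simp only: of_nat_power of_nat_numeral)
  finally show ?thesis .
qed

definition falling_fact :: "nat \<Rightarrow> nat \<Rightarrow> real" where
  "falling_fact a j = real (a choose j) * fact j"

lemma falling_fact_nonneg: "falling_fact a j \<ge> 0"
  by (simp add: falling_fact_def)

lemma falling_fact_Suc: "falling_fact a (Suc j) = real a * falling_fact (a - 1) j"
proof -
  have "real (Suc j) * real (a choose Suc j) = real a * real ((a - 1) choose j)"
    using binomial_absorption[of j a] by (metis of_nat_mult)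
  have "falling_fact a (Suc j) = (real (Suc j) * real (a choose Suc j)) * fact j"
    unfolding falling_fact_def by (simp add: algebra_simps)
  also have "\<dots> = real a * falling_fact (a - 1) j"
    unfolding \<open>real (Suc j) * _ = _\<close> falling_fact_def by (simp add: algebra_simps)
  finally show ?thesis .
qed

lemma falling_fact_le: "falling_fact a j \<le> 2 ^ a * fact j"
proof -
  have "real (a choose j) \<le> 2 ^ a"
    by (rule binomial_le_pow2_real)
  thus ?thesis unfolding falling_fact_def by (simp add: mult_right_mono)
qed

definition shift_down :: "(nat \<Rightarrow> nat \<Rightarrow> real) \<Rightarrow> nat \<Rightarrow> nat \<Rightarrow> nat \<Rightarrow> real" where
  "shift_down N a b j = (if j \<le> a \<and> j \<le> b then N (a - j) (b - j) else 0)"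

lemma shift_down_Suc: "a \<ge> 1 \<Longrightarrow> b \<ge> 1 \<Longrightarrow> shift_down N (a - 1) (b - 1) j = shift_down N a b (Suc j)"
  unfolding shift_down_def by auto

lemma shift_down_nonneg: "(\<And>a b. N a b \<ge> 0) \<Longrightarrow> shift_down N a b j \<ge> 0"
  unfolding shift_down_def by auto

text \<open>If \<open>N a b\<close> bounds \<open>X\<^sup>a Y\<^sup>b u\<close>, then \<open>commutator_sum \<bar>c\<bar> N k a b\<close> bounds every product of \<open>a\<close>
  factors \<open>X\<close> and \<open>b\<close> factors \<open>Y\<close> applied to \<open>u\<close> in which all but \<open>k\<close> of the \<open>Y\<close>'s stand rightmost:
  moving those \<open>k\<close> factors to the right with \<open>[X, Y] = c\<close> yields the terms \<open>X\<^sup>a\<^sup>-\<^sup>j Y\<^sup>b\<^sup>-\<^sup>j u\<close>, \<open>j \<le> k\<close>,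
  with coefficients at most \<open>(k choose j) a (a - 1) \<cdots> (a - j + 1) \<bar>c\<bar>\<^sup>j\<close>.\<close>
definition commutator_sum :: "real \<Rightarrow> (nat \<Rightarrow> nat \<Rightarrow> real) \<Rightarrow> nat \<Rightarrow> nat \<Rightarrow> nat \<Rightarrow> real" where
  "commutator_sum \<gamma> N k a b = (\<Sum>j\<le>k. real (k choose j) * (falling_fact a j * \<gamma> ^ j * shift_down N a b j))"

lemma commutator_sum_0: "commutator_sum \<gamma> N 0 a b = N a b"
  by (simp add: commutator_sum_def falling_fact_def shift_down_def)

lemma sum_binomial_Suc:
  fixes T :: "nat \<Rightarrow> real"
  shows "(\<Sum>j\<le>Suc k. real (Suc k choose j) * T j)
           = (\<Sum>j\<le>k. real (k choose j) * T j) + (\<Sum>j\<le>k. real (k choose j) * T (Suc j))"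
proof -
  have "(\<Sum>j\<le>Suc k. real (Suc k choose j) * T j) = T 0 + (\<Sum>j\<le>k. real (Suc k choose Suc j) * T (Suc j))"
    by (subst sum.atMost_Suc_shift) simp
  also have "\<dots> = T 0 + (\<Sum>j\<le>k. real (k choose Suc j) * T (Suc j)) + (\<Sum>j\<le>k. real (k choose j) * T (Suc j))"
    by (simp add: sum.distrib algebra_simps)
  also have "T 0 + (\<Sum>j\<le>k. real (k choose Suc j) * T (Suc j)) = (\<Sum>j\<le>Suc k. real (k choose j) * T j)"
    by (subst sum.atMost_Suc_shift) simp
  also have "\<dots> = (\<Sum>j\<le>k. real (k choose j) * T j)"
    by simp
  finally show ?thesis .
qed

lemma commutator_sum_step:
  assumes \<gamma>: "\<gamma> \<ge> 0" and N: "\<And>a b. N a b \<ge> 0" and "a0 \<le> A" "B \<ge> 1"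
  shows "commutator_sum \<gamma> N k A B + real a0 * \<gamma> * commutator_sum \<gamma> N k (A - 1) (B - 1)
           \<le> commutator_sum \<gamma> N (Suc k) A B"
proof -
  define T where "T j = falling_fact A j * \<gamma> ^ j * shift_down N A B j" for j
  have T_nonneg: "T j \<ge> 0" for j
    unfolding T_def using \<gamma> falling_fact_nonneg shift_down_nonneg[OF N] by simp
  have "real a0 * \<gamma> * commutator_sum \<gamma> N k (A - 1) (B - 1) \<le> (\<Sum>j\<le>k. real (k choose j) * T (Suc j))"
  proof (cases "a0 = 0")
    case True
    thus ?thesis using T_nonneg by (simp add: sum_nonneg)
  next
    case False
    have "real a0 * \<gamma> * commutator_sum \<gamma> N k (A - 1) (B - 1) = (\<Sum>j\<le>k. real (k choose j) *
        ((real a0 * falling_fact (A - 1) j) * \<gamma> ^ Suc j * shift_down N (A - 1) (B - 1) j))"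
      by (simp add: commutator_sum_def sum_distrib_left algebra_simps)
    also have "\<dots> \<le> (\<Sum>j\<le>k. real (k choose j) * T (Suc j))"
    proof (intro sum_mono mult_left_mono)
      fix j
      have "real a0 * falling_fact (A - 1) j \<le> falling_fact A (Suc j)"
        using \<open>a0 \<le> A\<close> by (simp add: falling_fact_Suc falling_fact_nonneg mult_right_mono)
      moreover have "shift_down N (A - 1) (B - 1) j = shift_down N A B (Suc j)"
        using False assms(3,4) by (intro shift_down_Suc) auto
      ultimately show "real a0 * falling_fact (A - 1) j * \<gamma> ^ Suc j * shift_down N (A - 1) (B - 1) j \<le> T (Suc j)"
        unfolding T_def using \<gamma> shift_down_nonneg[OF N] by (simp add: mult_right_mono)
    qed simp
    finally show ?thesis .
  qed
  moreover have "commutator_sum \<gamma> N (Suc k) A B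
      = commutator_sum \<gamma> N k A B + (\<Sum>j\<le>k. real (k choose j) * T (Suc j))"
    unfolding commutator_sum_def T_def by (rule sum_binomial_Suc)
  ultimately show ?thesis by linarith
qed

context
  fixes m q :: "nat \<Rightarrow> real" and N :: "nat \<Rightarrow> nat \<Rightarrow> real" and C E K c :: real
  assumes m: "\<And>k. m k > 0" "\<And>x y. m x * m y \<le> m (x + y)"
    and q: "\<And>k. q k > 0" "\<And>x y. q x * q y \<le> q (x + y)"
    and K: "K \<ge> 1" and c: "c \<ge> 0" and fact_le: "\<And>j. fact j * c ^ j \<le> K ^ j * m j * q j"
    and E: "E \<ge> 1" and C: "C \<ge> 0"
    and N: "\<And>a b. 0 \<le> N a b" "\<And>a b. N a b \<le> C * E ^ (a + b) * m a * q b"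
begin

lemma commutator_term_le:
  "real (b choose j) * (falling_fact a j * c ^ j * shift_down N a b j) \<le> C * (2 * K * E) ^ (a + b) * m a * q b"
proof (cases "j \<le> a \<and> j \<le> b")
  case False
  have "0 \<le> C * (2 * K * E) ^ (a + b) * m a * q b"
    using C K E m(1)[of a] q(1)[of b] by simp
  thus ?thesis using False by (auto simp: shift_down_def)
next
  case True
  have choose_le: "real (b choose j) \<le> 2 ^ b"
    by (rule binomial_le_pow2_real)
  have N_le: "N (a - j) (b - j) \<le> C * E ^ (a + b) * m (a - j) * q (b - j)"
  proof -
    have "E ^ (a - j + (b - j)) \<le> E ^ (a + b)" using E by (intro power_increasing) auto
    hence "C * E ^ (a - j + (b - j)) * m (a - j) * q (b - j) \<le> C * E ^ (a + b) * m (a - j) * q (b - j)"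
      using C m(1)[of "a - j"] q(1)[of "b - j"] by (intro mult_right_mono mult_left_mono) auto
    thus ?thesis using N(2)[of "a - j" "b - j"] by linarith
  qed
  have "real (b choose j) * (falling_fact a j * c ^ j * N (a - j) (b - j))
      \<le> 2 ^ b * (2 ^ a * fact j * c ^ j * N (a - j) (b - j))"
    using choose_le falling_fact_le[of a j] falling_fact_nonneg[of a j] N(1) c
    by (intro mult_mono mult_right_mono) auto
  also have "\<dots> = 2 ^ (a + b) * (fact j * c ^ j) * N (a - j) (b - j)"
    by (simp add: power_add algebra_simps)
  also have "\<dots> \<le> 2 ^ (a + b) * (K ^ j * m j * q j) * (C * E ^ (a + b) * m (a - j) * q (b - j))"
    by (rule mult_mono[OF mult_left_mono[OF fact_le] N_le]) (use N(1) K m(1)[of j] q(1)[of j] in auto)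
  also have "\<dots> = (2 ^ (a + b) * C * E ^ (a + b)) * (K ^ j * ((m j * m (a - j)) * (q j * q (b - j))))"
    by (simp add: algebra_simps)
  also have "\<dots> \<le> (2 ^ (a + b) * C * E ^ (a + b)) * (K ^ (a + b) * (m a * q b))"
  proof (rule mult_left_mono)
    have "m j * m (a - j) \<le> m a" "q j * q (b - j) \<le> q b"
      using True m(2)[of j "a - j"] q(2)[of j "b - j"] by simp_all
    hence "(m j * m (a - j)) * (q j * q (b - j)) \<le> m a * q b"
      using m(1)[of a] q(1)[of j] q(1)[of "b - j"] by (intro mult_mono[of "m j * m (a - j)"]) simp_all
    moreover have "K ^ j \<le> K ^ (a + b)" using K True by (intro power_increasing) auto
    ultimately show "K ^ j * ((m j * m (a - j)) * (q j * q (b - j))) \<le> K ^ (a + b) * (m a * q b)"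
      using K m(1)[of j] m(1)[of "a - j"] q(1)[of j] q(1)[of "b - j"] by (intro mult_mono[of "K ^ j"]) simp_all
    show "0 \<le> 2 ^ (a + b) * C * E ^ (a + b)" using C E by simp
  qed
  also have "\<dots> = C * (2 * K * E) ^ (a + b) * m a * q b"
    by (simp add: power_mult_distrib)
  finally show ?thesis using True by (simp add: shift_down_def)
qed

lemma commutator_sum_le: "commutator_sum c N b a b \<le> C * (4 * K * E) ^ (a + b) * m a * q b"
proof -
  define M where "M = C * (2 * K * E) ^ (a + b) * m a * q b"
  have "M \<ge> 0" unfolding M_def using K E C m(1)[of a] q(1)[of b] by simp
  have "real (Suc b) \<le> real (2 ^ b)"
    using less_exp[of b] by (simp only: Suc_le_eq[symmetric] of_nat_le_iff)
  also have "\<dots> = 2 ^ b" by (simp only: of_nat_power of_nat_numeral)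
  also have "\<dots> \<le> 2 ^ (a + b)" by (intro power_increasing) auto
  finally have "real (Suc b) \<le> 2 ^ (a + b)" .
  have "commutator_sum c N b a b \<le> (\<Sum>j\<le>b. M)"
    unfolding M_def commutator_sum_def by (intro sum_mono commutator_term_le)
  also have "\<dots> \<le> 2 ^ (a + b) * M"
    using \<open>M \<ge> 0\<close> \<open>real (Suc b) \<le> 2 ^ (a + b)\<close> by (simp add: mult_right_mono)
  also have "\<dots> = C * (4 * K * E) ^ (a + b) * m a * q b"
  proof -
    have "(4::real) ^ (a + b) = 2 ^ (a + b) * 2 ^ (a + b)" by (simp flip: power_mult_distrib)
    thus ?thesis by (simp add: M_def power_mult_distrib mult_ac)
  qed
  finally show ?thesis .
qed

end

section \<open>Words of operators and their weights\<close>

lemma op_word_append: "op_word Z (\<alpha> @ \<beta>) v = op_word Z \<alpha> (op_word Z \<beta> v)"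
  by (induction \<alpha>) auto

lemma op_word_replicate: "op_word Z (replicate k i) v = (Z i ^^ k) v"
  by (induction k) auto

lemma count_idx_Nil [simp]: "count_idx [] j = 0"
  by (simp add: count_idx_def)

lemma count_idx_Cons: "count_idx (i # \<alpha>) j = (if j = i then 1 else 0) + count_idx \<alpha> j"
  by (auto simp: count_idx_def)

lemma count_idx_append: "count_idx (\<alpha> @ \<beta>) j = count_idx \<alpha> j + count_idx \<beta> j"
  by (simp add: count_idx_def)

lemma count_idx_snoc: "count_idx (w @ [l]) j = count_idx w j + (if j = l then 1 else 0)"
  by (simp add: count_idx_def)

lemma count_idx_replicate: "count_idx (replicate k i) j = (if j = i then k else 0)"
  by (induction k) (auto simp: count_idx_def)

lemma count_idx_filter: "count_idx (filter P \<alpha>) j = (if P j then count_idx \<alpha> j else 0)"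
  by (induction \<alpha>) (auto simp: count_idx_def)

lemma count_idx_rev: "count_idx (rev \<alpha>) j = count_idx \<alpha> j"
  by (simp add: count_idx_def rev_filter[symmetric])

lemma count_idx_eq_0: "j \<notin> set \<alpha> \<Longrightarrow> count_idx \<alpha> j = 0"
  by (auto simp: count_idx_def filter_empty_conv)

lemma count_idx_map_add: "count_idx (map (\<lambda>i. i + n) \<alpha>) (j + n) = count_idx \<alpha> j"
  by (induction \<alpha>) (auto simp: count_idx_def)

lemma sum_count_idx: "finite S \<Longrightarrow> set \<alpha> \<subseteq> S \<Longrightarrow> (\<Sum>j\<in>S. count_idx \<alpha> j) = length \<alpha>"
  by (induction \<alpha>) (auto simp: count_idx_Cons sum.distrib)

lemma p_word_Nil: "\<forall>l\<in>{1..N}. p l 0 = 1 \<Longrightarrow> p_word N p [] = 1"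
  unfolding p_word_def by simp

lemma p_word_pos: "\<forall>l\<in>{1..N}. \<forall>k. p l k > 0 \<Longrightarrow> p_word N p \<alpha> > 0"
  unfolding p_word_def by (intro prod_pos) auto

lemma p_word_filter:
  "\<forall>l\<in>{1..N}. p l 0 = 1 \<Longrightarrow> p_word N p \<alpha> = p_word N p (filter P \<alpha>) * p_word N p (filter (\<lambda>l. \<not> P l) \<alpha>)"
  unfolding p_word_def prod.distrib[symmetric] by (rule prod.cong) (auto simp: count_idx_filter)

lemma p_word_replicate:
  assumes "\<forall>l\<in>{1..N}. p l 0 = 1" "i \<in> {1..N}"
  shows "p_word N p (replicate k i) = p i k"
proof -
  have "p_word N p (replicate k i) = (\<Prod>l\<in>{1..N}. if l = i then p i k else 1)"
    unfolding p_word_def by (rule prod.cong) (use assms(1) in \<open>auto simp: count_idx_replicate\<close>)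
  thus ?thesis using assms(2) by simp
qed

lemma p_word_two_letters:
  assumes p0: "\<forall>l\<in>{1..N}. p l 0 = 1" and ij: "i \<in> {1..N}" "j \<in> {1..N}" "i \<noteq> j"
    and \<alpha>: "set \<alpha> \<subseteq> {i, j}"
  shows "p_word N p \<alpha> = p i (count_idx \<alpha> i) * p j (count_idx \<alpha> j)"
proof -
  have "p l (count_idx \<alpha> l) = 1" if "l \<in> {1..N} - {i, j}" for l
  proof -
    have "l \<notin> set \<alpha>" using that \<alpha> by auto
    thus ?thesis using that p0 by (simp add: count_idx_eq_0)
  qed
  hence "p_word N p \<alpha> = (\<Prod>l\<in>{i, j}. p l (count_idx \<alpha> l))"
    unfolding p_word_def by (intro prod.mono_neutral_right) (use ij in auto)
  thus ?thesis using ij by simp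
qed

lemma p_word_rev_append:
  assumes pos: "\<forall>l\<in>{1..N}. \<forall>k. p l k > 0" and A2: "\<forall>l\<in>{1..N}. cond_A2 H (p l)"
    and \<alpha>: "set \<alpha> \<subseteq> {1..N}"
  shows "p_word N p (rev \<alpha> @ \<alpha>) \<le> H ^ (2 * length \<alpha>) * (p_word N p \<alpha>)\<^sup>2"
proof -
  have "p_word N p (rev \<alpha> @ \<alpha>) = (\<Prod>l=1..N. p l (2 * count_idx \<alpha> l))"
    unfolding p_word_def by (simp add: count_idx_append count_idx_rev mult_2)
  also have "\<dots> \<le> (\<Prod>l=1..N. H ^ (2 * count_idx \<alpha> l) * (p l (count_idx \<alpha> l))\<^sup>2)"
    using A2 pos by (intro prod_mono) (auto simp: cond_A2_double less_imp_le)
  also have "\<dots> = H ^ (\<Sum>l=1..N. 2 * count_idx \<alpha> l) * (p_word N p \<alpha>)\<^sup>2"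
    by (simp add: prod.distrib power_sum p_word_def prod_power_distrib)
  also have "(\<Sum>l=1..N. 2 * count_idx \<alpha> l) = 2 * length \<alpha>"
    using sum_count_idx[of "{1..N}" \<alpha>] \<alpha> by (simp add: sum_distrib_left[symmetric])
  finally show ?thesis .
qed

lemma p_word_rev_append_bound:
  assumes pos: "\<forall>l\<in>{1..N}. \<forall>k. p l k > 0" and A2: "\<forall>l\<in>{1..N}. cond_A2 H (p l)"
    and P: "set P \<subseteq> {1..N}" and C: "C \<ge> 0" and B: "B \<ge> 0"
    and y: "y \<le> C * B ^ length (rev P @ P) * p_word N p (rev P @ P)"
  shows "y \<le> C * ((B * H) ^ length P * p_word N p P)\<^sup>2"
proof -
  have "y \<le> C * (B ^ length P)\<^sup>2 * (H ^ (2 * length P) * (p_word N p P)\<^sup>2)"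
    using y p_word_rev_append[OF pos A2 P] C B
    by (simp add: mult_2 power_add power2_eq_square mult_left_mono order_trans)
  also have "\<dots> = C * ((B * H) ^ length P * p_word N p P)\<^sup>2"
    by (simp add: power_mult_distrib power_mult[symmetric] mult.commute[of 2] mult_ac)
  finally show ?thesis .
qed

lemma join_tuple_left [simp]: "i \<le> n \<Longrightarrow> join_tuple n F G i = F i"
  by (simp add: join_tuple_def)

lemma join_tuple_right [simp]: "1 \<le> i \<Longrightarrow> join_tuple n F G (i + n) = G i"
  by (simp add: join_tuple_def)

lemma join_tuple_all:
  "\<forall>i\<in>{1..n}. P (F i) \<and> P (G i) \<Longrightarrow> l \<in> {1..2 * n} \<Longrightarrow> P (join_tuple n F G l)"
proof (cases "l \<le> n")
  case False
  assume "\<forall>i\<in>{1..n}. P (F i) \<and> P (G i)" "l \<in> {1..2 * n}"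
  moreover from False this(2) have "l - n \<in> {1..n}" by auto
  ultimately show ?thesis using False by (auto simp: join_tuple_def)
qed (auto simp: join_tuple_def)

lemma op_word_join_left: "set \<alpha> \<subseteq> {1..n} \<Longrightarrow> op_word (join_tuple n X Y) \<alpha> v = op_word X \<alpha> v"
  by (induction \<alpha>) auto

lemma op_word_join_right:
  "set \<alpha> \<subseteq> {1..n} \<Longrightarrow> op_word (join_tuple n X Y) (map (\<lambda>i. i + n) \<alpha>) v = op_word Y \<alpha> v"
  by (induction \<alpha>) auto

lemma in_dom_word_join_left:
  "set \<alpha> \<subseteq> {1..n} \<Longrightarrow> in_dom_word (join_tuple n DX DY) (join_tuple n X Y) \<alpha> u = in_dom_word DX X \<alpha> u"
  by (induction \<alpha>) (auto simp: op_word_join_left)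

lemma in_dom_word_join_right:
  "set \<alpha> \<subseteq> {1..n} \<Longrightarrow>
     in_dom_word (join_tuple n DX DY) (join_tuple n X Y) (map (\<lambda>i. i + n) \<alpha>) u = in_dom_word DY Y \<alpha> u"
  by (induction \<alpha>) (auto simp: op_word_join_right)

lemma p_word_join_left:
  assumes "set \<alpha> \<subseteq> {1..n}" "\<forall>i\<in>{1..n}. q i 0 = 1"
  shows "p_word (2 * n) (join_tuple n m q) \<alpha> = p_word n m \<alpha>"
proof -
  have "join_tuple n m q l (count_idx \<alpha> l) = 1" if "l \<in> {1..2 * n} - {1..n}" for l
  proof -
    have "l \<notin> set \<alpha>" "l - n \<in> {1..n}" "\<not> l \<le> n" using that assms(1) by auto
    thus ?thesis using assms(2) by (simp add: count_idx_eq_0 join_tuple_def)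
  qed
  hence "p_word (2 * n) (join_tuple n m q) \<alpha> = (\<Prod>l\<in>{1..n}. join_tuple n m q l (count_idx \<alpha> l))"
    unfolding p_word_def by (intro prod.mono_neutral_right) auto
  thus ?thesis unfolding p_word_def by simp
qed

lemma p_word_join_right:
  assumes "set \<alpha> \<subseteq> {1..n}" "\<forall>i\<in>{1..n}. m i 0 = 1"
  shows "p_word (2 * n) (join_tuple n m q) (map (\<lambda>i. i + n) \<alpha>) = p_word n q \<alpha>"
proof -
  let ?\<beta> = "map (\<lambda>i. i + n) \<alpha>"
  have "join_tuple n m q l (count_idx ?\<beta> l) = 1" if "l \<in> {1..2 * n} - {1+n..n+n}" for l
  proof -
    have "l \<notin> set ?\<beta>" "l \<in> {1..n}" using that assms(1) by auto
    thus ?thesis using assms(2) by (simp add: count_idx_eq_0)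
  qed
  hence "p_word (2 * n) (join_tuple n m q) ?\<beta> = (\<Prod>l\<in>{1+n..n+n}. join_tuple n m q l (count_idx ?\<beta> l))"
    unfolding p_word_def by (intro prod.mono_neutral_right) auto
  also have "\<dots> = (\<Prod>i\<in>{1..n}. join_tuple n m q (i + n) (count_idx ?\<beta> (i + n)))"
    by (rule prod.shift_bounds_cl_nat_ivl)
  finally show ?thesis unfolding p_word_def by (simp add: count_idx_map_add)
qed

lemma in_dom_word_invariant:
  "\<forall>l\<in>set \<alpha>. D \<subseteq> Dom l \<and> Z l ` D \<subseteq> D \<Longrightarrow> u \<in> D \<Longrightarrow> in_dom_word Dom Z \<alpha> u \<and> op_word Z \<alpha> u \<in> D"
  by (induction \<alpha>) auto

lemma in_dom_word_replicate: "in_dom_word Dom Z (replicate (Suc j) i) u \<Longrightarrow> (Z i ^^ j) u \<in> Dom i"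
  by (simp add: op_word_replicate)

lemma S_class_join_subset_left:
  assumes "\<forall>i\<in>{1..n}. q i 0 = 1"
  shows "S_class (2 * n) (join_tuple n DX DY) (join_tuple n X Y) (join_tuple n m q) \<subseteq> S_class n DX X m"
proof
  fix u assume u: "u \<in> S_class (2 * n) (join_tuple n DX DY) (join_tuple n X Y) (join_tuple n m q)"
  have lift: "\<alpha> \<in> multi_indices n \<Longrightarrow> \<alpha> \<in> multi_indices (2 * n)" for \<alpha>
    by (auto simp: multi_indices_def)
  have "\<alpha> \<in> multi_indices n \<Longrightarrow> in_dom_word DX X \<alpha> u" for \<alpha>
    using u lift[of \<alpha>] in_dom_word_join_left[of \<alpha> n DX DY X Y u]
    unfolding S_class_def C_infty_def by (auto simp: multi_indices_def)
  moreover obtain A C where "A > 0" "C > 0" and bound: "\<forall>\<alpha>\<in>multi_indices (2 * n).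
      norm (op_word (join_tuple n X Y) \<alpha> u) \<le> C * A ^ length \<alpha> * p_word (2 * n) (join_tuple n m q) \<alpha>"
    using u unfolding S_class_def by blast
  moreover have "\<alpha> \<in> multi_indices n \<Longrightarrow> norm (op_word X \<alpha> u) \<le> C * A ^ length \<alpha> * p_word n m \<alpha>" for \<alpha>
    using bound lift[of \<alpha>] assms
    by (force simp: multi_indices_def op_word_join_left p_word_join_left)
  ultimately show "u \<in> S_class n DX X m"
    unfolding S_class_def C_infty_def by blast
qed

lemma S_class_join_subset_right:
  assumes "\<forall>i\<in>{1..n}. m i 0 = 1"
  shows "S_class (2 * n) (join_tuple n DX DY) (join_tuple n X Y) (join_tuple n m q) \<subseteq> S_class n DY Y q"
proof
  fix u assume u: "u \<in> S_class (2 * n) (join_tuple n DX DY) (join_tuple n X Y) (join_tuple n m q)"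
  have shift: "\<alpha> \<in> multi_indices n \<Longrightarrow> map (\<lambda>i. i + n) \<alpha> \<in> multi_indices (2 * n)" for \<alpha>
    by (auto simp: multi_indices_def)
  have "\<alpha> \<in> multi_indices n \<Longrightarrow> in_dom_word DY Y \<alpha> u" for \<alpha>
    using u shift[of \<alpha>] in_dom_word_join_right[of \<alpha> n DX DY X Y u]
    unfolding S_class_def C_infty_def by (auto simp: multi_indices_def)
  moreover obtain A C where "A > 0" "C > 0" and bound: "\<forall>\<alpha>\<in>multi_indices (2 * n).
      norm (op_word (join_tuple n X Y) \<alpha> u) \<le> C * A ^ length \<alpha> * p_word (2 * n) (join_tuple n m q) \<alpha>"
    using u unfolding S_class_def by blast
  moreover have "\<alpha> \<in> multi_indices n \<Longrightarrow> norm (op_word Y \<alpha> u) \<le> C * A ^ length \<alpha> * p_word n q \<alpha>" for \<alpha>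
    using bound shift[of \<alpha>] assms
    by (force simp: multi_indices_def op_word_join_right p_word_join_right)
  ultimately show "u \<in> S_class n DY Y q"
    unfolding S_class_def C_infty_def by blast
qed

lemma S_class_subset_S_single:
  assumes p0: "\<forall>l\<in>{1..N}. p l 0 = 1" and i: "i \<in> {1..N}"
  shows "S_class N Dom Z p \<subseteq> S_single (Dom i) (Z i) (p i)"
proof
  fix u assume u: "u \<in> S_class N Dom Z p"
  have rep: "k \<ge> 1 \<Longrightarrow> replicate k i \<in> multi_indices N" for k
    using i by (auto simp: multi_indices_def)
  have "(Z i ^^ j) u \<in> Dom i" for j
    using u rep[of "Suc j"] unfolding S_class_def C_infty_def by (auto intro: in_dom_word_replicate)
  moreover obtain A C where "A > 0" "C > 0" and bound: "\<forall>\<alpha>\<in>multi_indices N.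
      norm (op_word Z \<alpha> u) \<le> C * A ^ length \<alpha> * p_word N p \<alpha>"
    using u unfolding S_class_def by blast
  moreover have "k \<ge> 1 \<Longrightarrow> norm ((Z i ^^ k) u) \<le> C * A ^ k * p i k" for k
    using bound rep[of k] p_word_replicate[of N p i k] p0 i by (force simp: op_word_replicate)
  ultimately show "u \<in> S_single (Dom i) (Z i) (p i)"
    unfolding S_single_def by blast
qed

lemma le_mult_power_mono:
  fixes x C A p :: real
  assumes "x \<le> C * A ^ k * p" "0 \<le> C" "C \<le> C'" "0 \<le> A" "A \<le> A'" "0 \<le> p"
  shows "x \<le> C' * A' ^ k * p"
proof -
  have "C * A ^ k \<le> C' * A' ^ k"
    using assms(2-5) by (intro mult_mono power_mono) auto
  thus ?thesis using assms(1,6) by (meson mult_right_mono order_trans)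
qed

lemma S_single_bound:
  fixes p :: "nat \<Rightarrow> real"
  assumes u: "u \<in> S_single Dom Z p" and p0: "p 0 = 1" and pos: "\<And>k. p k > 0"
  obtains C A where "C > 0" "A \<ge> 1" "\<And>k. norm ((Z ^^ k) u) \<le> C * A ^ k * p k"
proof -
  obtain A C where AC: "A > 0" "C > 0" and bound: "\<forall>k\<ge>1. norm ((Z ^^ k) u) \<le> C * A ^ k * p k"
    using u unfolding S_single_def by blast
  have "norm ((Z ^^ k) u) \<le> max C (norm u) * max A 1 ^ k * p k" for k
  proof (cases "k = 0")
    case False
    hence "norm ((Z ^^ k) u) \<le> C * A ^ k * p k" using bound by simp
    thus ?thesis by (rule le_mult_power_mono) (use AC pos[of k] in auto)
  qed (simp add: p0)
  thus thesis using AC by (intro that[of "max C (norm u)" "max A 1"]) auto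
qed

lemma le_of_square_le_mult:
  fixes x y z C1 C2 X1 X2 Y1 Y2 :: real
  assumes xyz: "x\<^sup>2 \<le> y * z" and yz: "0 \<le> y" "0 \<le> z" and "y \<le> C1 * X1\<^sup>2" "z \<le> C2 * X2\<^sup>2"
    and C: "0 < C1" "0 < C2" and X: "0 \<le> X1" "X1 \<le> Y1" "0 \<le> X2" "X2 \<le> Y2"
  shows "x \<le> max C1 C2 * (Y1 * Y2)"
proof -
  have "x\<^sup>2 \<le> (C1 * X1\<^sup>2) * (C2 * X2\<^sup>2)"
    using xyz mult_mono[of y "C1 * X1\<^sup>2" z "C2 * X2\<^sup>2"] assms(4,5) yz C by simp
  also have "\<dots> = (C1 * C2) * (X1 * X2)\<^sup>2" by (simp add: power_mult_distrib)
  also have "\<dots> \<le> (max C1 C2)\<^sup>2 * (Y1 * Y2)\<^sup>2"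
  proof (rule mult_mono)
    show "C1 * C2 \<le> (max C1 C2)\<^sup>2" using C by (simp add: power2_eq_square mult_mono)
    show "(X1 * X2)\<^sup>2 \<le> (Y1 * Y2)\<^sup>2" using X by (intro power_mono mult_mono) auto
  qed simp_all
  also have "\<dots> = (max C1 C2 * (Y1 * Y2))\<^sup>2" by (simp add: power_mult_distrib)
  finally have "x\<^sup>2 \<le> (max C1 C2 * (Y1 * Y2))\<^sup>2" .
  moreover have "0 \<le> max C1 C2 * (Y1 * Y2)" using C X by simp
  ultimately show ?thesis by (rule power2_le_imp_le)
qed

section \<open>Canonical commutation relations\<close>

definition invariant_linear_on :: "'a::complex_vector set \<Rightarrow> ('a \<Rightarrow> 'a) \<Rightarrow> bool" where
  "invariant_linear_on D f \<longleftrightarrow> f ` D \<subseteq> D \<and> (\<forall>v\<in>D. \<forall>w\<in>D. f (v + w) = f v + f w)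
     \<and> (\<forall>r. \<forall>v\<in>D. f (r *\<^sub>C v) = r *\<^sub>C f v)"

text \<open>Adjointness up to a unimodular factor: this is what hermitian and skew-hermitian operators
  have in common, and all that the Cauchy-Schwarz estimates need.\<close>
definition abs_adjoint_on :: "'a::complex_inner set \<Rightarrow> ('a \<Rightarrow> 'a) \<Rightarrow> ('a \<Rightarrow> 'a) \<Rightarrow> bool" where
  "abs_adjoint_on D f g \<longleftrightarrow> (\<forall>v\<in>D. \<forall>w\<in>D. cmod (cinner (f v) w) = cmod (cinner v (g w)))"

lemma invariant_linear_on_imp_in: "invariant_linear_on D f \<Longrightarrow> v \<in> D \<Longrightarrow> f v \<in> D"
  by (auto simp: invariant_linear_on_def)

lemma invariant_linear_on_diff_scaleC:
  assumes "csubspace D" "invariant_linear_on D f" "v \<in> D" "w \<in> D"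
  shows "f (v - r *\<^sub>C w) = f v - r *\<^sub>C f w"
proof -
  have "(- r) *\<^sub>C w \<in> D" using assms(1,4) by (simp add: csubspace_def)
  hence "f (v + (- r) *\<^sub>C w) = f v + (- r) *\<^sub>C f w"
    using assms(2-4) by (simp add: invariant_linear_on_def)
  thus ?thesis by (simp add: scaleC_minus_left)
qed

lemma invariant_linear_on_comp:
  "invariant_linear_on D f \<Longrightarrow> invariant_linear_on D g \<Longrightarrow> invariant_linear_on D (\<lambda>v. f (g v))"
  unfolding invariant_linear_on_def by (auto simp: image_subset_iff)

lemma invariant_linear_on_funpow: "invariant_linear_on D f \<Longrightarrow> invariant_linear_on D (f ^^ k)"
proof (induction k)
  case 0
  show ?case by (simp add: invariant_linear_on_def)
next
  case (Suc k)
  thus ?case using invariant_linear_on_comp[of D f "f ^^ k"] by (simp add: comp_def)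
qed

lemma lin_op_invariant_linear_on:
  "lin_op Dom f \<Longrightarrow> D \<subseteq> Dom \<Longrightarrow> f ` D \<subseteq> D \<Longrightarrow> invariant_linear_on D f"
  unfolding lin_op_def invariant_linear_on_def by blast

lemma abs_adjoint_on_comp:
  assumes "abs_adjoint_on D f g" "abs_adjoint_on D f' g'" "f' ` D \<subseteq> D" "g ` D \<subseteq> D"
  shows "abs_adjoint_on D (\<lambda>v. f (f' v)) (\<lambda>w. g' (g w))"
  using assms unfolding abs_adjoint_on_def by (simp add: image_subset_iff)

lemma hermitian_abs_adjoint_on: "hermitian Dom Z \<Longrightarrow> D \<subseteq> Dom \<Longrightarrow> abs_adjoint_on D Z Z"
  unfolding hermitian_def abs_adjoint_on_def by (simp add: subset_iff)

lemma skew_hermitian_abs_adjoint_on: "skew_hermitian Dom Z \<Longrightarrow> D \<subseteq> Dom \<Longrightarrow> abs_adjoint_on D Z Z"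
  unfolding skew_hermitian_def abs_adjoint_on_def by (simp add: subset_iff)

locale ccr_system =
  fixes n :: nat and D :: "'a::chilbert_space set" and DX DY :: "nat \<Rightarrow> 'a set"
    and X Y :: "nat \<Rightarrow> 'a \<Rightarrow> 'a" and c :: "nat \<Rightarrow> complex"
  assumes ops: "\<forall>i\<in>{1..n}. lin_op (DX i) (X i) \<and> lin_op (DY i) (Y i)"
    and herm: "\<forall>i\<in>{1..n}. (hermitian (DX i) (X i) \<or> skew_hermitian (DX i) (X i))
                          \<and> (hermitian (DY i) (Y i) \<or> skew_hermitian (DY i) (Y i))"
    and dom: "common_invariant_domain D {1..n} DX X"
             "common_invariant_domain D {1..n} DY Y"
    and comm_XX: "\<forall>i\<in>{1..n}. \<forall>j\<in>{1..n}. \<forall>v\<in>D. X i (X j v) = X j (X i v)"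
    and comm_YY: "\<forall>i\<in>{1..n}. \<forall>j\<in>{1..n}. \<forall>v\<in>D. Y i (Y j v) = Y j (Y i v)"
    and comm_XY: "\<forall>i\<in>{1..n}. \<forall>j\<in>{1..n}. i \<noteq> j \<longrightarrow> (\<forall>v\<in>D. X i (Y j v) = Y j (X i v))"
    and comm_XYi: "\<forall>i\<in>{1..n}. c i \<noteq> 0 \<and> (\<forall>v\<in>D. X i (Y i v) - Y i (X i v) = c i *\<^sub>C v)"
begin

text \<open>The letters \<open>1..2n\<close> of a word stand for \<open>X 1, ..., X n, Y 1, ..., Y n\<close>; the letters \<open>i\<close> and
  \<open>i + n\<close> form the \<open>i\<close>-th canonical pair.\<close>
abbreviation Z :: "nat \<Rightarrow> 'a \<Rightarrow> 'a" where
  "Z \<equiv> join_tuple n X Y"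

definition pair_of :: "nat \<Rightarrow> nat" where
  "pair_of l = (if l \<le> n then l else l - n)"

lemma D_csubspace: "csubspace D"
  using dom(1) by (simp add: common_invariant_domain_def)

lemma Z_letter_cases:
  assumes "l \<in> {1..2 * n}"
  obtains i where "i \<in> {1..n}" "l = i" "Z l = X i" "pair_of l = i"
    | i where "i \<in> {1..n}" "l = i + n" "Z l = Y i" "pair_of l = i"
proof (cases "l \<le> n")
  case True
  thus ?thesis using assms that(1)[of l] by (simp add: pair_of_def)
next
  case False
  thus ?thesis using assms that(2)[of "l - n"] by (simp add: pair_of_def join_tuple_def)
qed

lemma X_invariant_linear: "i \<in> {1..n} \<Longrightarrow> invariant_linear_on D (X i)"
  using ops dom(1) by (intro lin_op_invariant_linear_on[of "DX i"]) (auto simp: common_invariant_domain_def)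

lemma Y_invariant_linear: "i \<in> {1..n} \<Longrightarrow> invariant_linear_on D (Y i)"
  using ops dom(2) by (intro lin_op_invariant_linear_on[of "DY i"]) (auto simp: common_invariant_domain_def)

lemma Z_invariant_linear:
  assumes "l \<in> {1..2 * n}"
  shows "invariant_linear_on D (Z l)"
  using assms by (cases rule: Z_letter_cases) (auto intro: X_invariant_linear Y_invariant_linear)

lemma op_word_invariant_linear: "set w \<subseteq> {1..2 * n} \<Longrightarrow> invariant_linear_on D (op_word Z w)"
proof (induction w)
  case (Cons l w)
  thus ?case using Z_invariant_linear[of l] invariant_linear_on_comp[of D "Z l" "op_word Z w"] by simp
qed (simp add: invariant_linear_on_def)

lemma op_word_in_D: "set w \<subseteq> {1..2 * n} \<Longrightarrow> v \<in> D \<Longrightarrow> op_word Z w v \<in> D"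
  using op_word_invariant_linear invariant_linear_on_imp_in by blast

lemma X_pow_in_D: "i \<in> {1..n} \<Longrightarrow> v \<in> D \<Longrightarrow> (X i ^^ k) v \<in> D"
  by (meson X_invariant_linear invariant_linear_on_funpow invariant_linear_on_imp_in)

lemma Y_pow_in_D: "i \<in> {1..n} \<Longrightarrow> v \<in> D \<Longrightarrow> (Y i ^^ k) v \<in> D"
  by (meson Y_invariant_linear invariant_linear_on_funpow invariant_linear_on_imp_in)

lemma Z_abs_adjoint:
  assumes "l \<in> {1..2 * n}"
  shows "abs_adjoint_on D (Z l) (Z l)"
  using assms
proof (cases rule: Z_letter_cases)
  case (1 i)
  have "D \<subseteq> DX i" using dom(1) 1 by (auto simp: common_invariant_domain_def)
  moreover have "hermitian (DX i) (X i) \<or> skew_hermitian (DX i) (X i)" using herm 1 by blast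
  ultimately show ?thesis unfolding \<open>Z l = X i\<close>
    by (elim disjE) (simp_all add: hermitian_abs_adjoint_on skew_hermitian_abs_adjoint_on)
next
  case (2 i)
  have "D \<subseteq> DY i" using dom(2) 2 by (auto simp: common_invariant_domain_def)
  moreover have "hermitian (DY i) (Y i) \<or> skew_hermitian (DY i) (Y i)" using herm 2 by blast
  ultimately show ?thesis unfolding \<open>Z l = Y i\<close>
    by (elim disjE) (simp_all add: hermitian_abs_adjoint_on skew_hermitian_abs_adjoint_on)
qed

lemma op_word_abs_adjoint: "set w \<subseteq> {1..2 * n} \<Longrightarrow> abs_adjoint_on D (op_word Z w) (op_word Z (rev w))"
proof (induction w)
  case (Cons l w)
  hence l: "l \<in> {1..2 * n}" and w: "set w \<subseteq> {1..2 * n}" by auto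
  have "Z l ` D \<subseteq> D" "op_word Z w ` D \<subseteq> D"
    using invariant_linear_on_imp_in[OF Z_invariant_linear[OF l]] op_word_in_D[OF w] by auto
  hence "abs_adjoint_on D (\<lambda>v. Z l (op_word Z w v)) (\<lambda>v. op_word Z (rev w) (Z l v))"
    by (rule abs_adjoint_on_comp[OF Z_abs_adjoint[OF l] Cons.IH[OF w], rotated])
  thus ?case by (simp add: op_word_append)
qed (simp add: abs_adjoint_on_def)


lemma Z_commute:
  assumes l: "l \<in> {1..2 * n}" and l': "l' \<in> {1..2 * n}" and ne: "pair_of l \<noteq> pair_of l'" and v: "v \<in> D"
  shows "Z l (Z l' v) = Z l' (Z l v)"
  using l
proof (cases rule: Z_letter_cases)
  case (1 i)
  from l' show ?thesis
  proof (cases rule: Z_letter_cases)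
    case (1 j)
    thus ?thesis using \<open>i \<in> {1..n}\<close> \<open>Z l = X i\<close> comm_XX v by auto
  next
    case (2 j)
    thus ?thesis using \<open>i \<in> {1..n}\<close> \<open>Z l = X i\<close> \<open>pair_of l = i\<close> comm_XY ne v by auto
  qed
next
  case (2 i)
  from l' show ?thesis
  proof (cases rule: Z_letter_cases)
    case (1 j)
    thus ?thesis using \<open>i \<in> {1..n}\<close> \<open>Z l = Y i\<close> \<open>pair_of l = i\<close> comm_XY ne v by auto
  next
    case (2 j)
    thus ?thesis using \<open>i \<in> {1..n}\<close> \<open>Z l = Y i\<close> comm_YY v by auto
  qed
qed

lemma Z_commute_op_word:
  assumes "l \<in> {1..2 * n}" "set w \<subseteq> {1..2 * n}" "\<forall>l'\<in>set w. pair_of l' \<noteq> pair_of l" "v \<in> D"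
  shows "Z l (op_word Z w v) = op_word Z w (Z l v)"
  using assms(2,3)
proof (induction w)
  case (Cons l' w)
  have "Z l (Z l' (op_word Z w v)) = Z l' (Z l (op_word Z w v))"
    using Cons.prems assms(1,4) by (intro Z_commute op_word_in_D) auto
  thus ?case using Cons by simp
qed simp

lemma op_word_commute:
  assumes "set w \<subseteq> {1..2 * n}" "set w' \<subseteq> {1..2 * n}"
    "\<forall>l\<in>set w. \<forall>l'\<in>set w'. pair_of l \<noteq> pair_of l'" "v \<in> D"
  shows "op_word Z w (op_word Z w' v) = op_word Z w' (op_word Z w v)"
  using assms(1,3,4)
proof (induction w arbitrary: v)
  case (Cons l w)
  have "Z l (op_word Z w' (op_word Z w v)) = op_word Z w' (Z l (op_word Z w v))"
    using Cons.prems assms(2) by (intro Z_commute_op_word op_word_in_D) auto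
  thus ?case using Cons by simp
qed simp

lemma op_word_filter_pair:
  assumes "set w \<subseteq> {1..2 * n}" "v \<in> D"
  shows "op_word Z w v = op_word Z (filter (\<lambda>l. pair_of l = i) w) (op_word Z (filter (\<lambda>l. pair_of l \<noteq> i) w) v)"
  using assms(1)
proof (induction w)
  case (Cons l w)
  show ?case
  proof (cases "pair_of l = i")
    case False
    have "Z l (op_word Z (filter (\<lambda>l. pair_of l = i) w) (op_word Z (filter (\<lambda>l. pair_of l \<noteq> i) w) v))
        = op_word Z (filter (\<lambda>l. pair_of l = i) w) (Z l (op_word Z (filter (\<lambda>l. pair_of l \<noteq> i) w) v))"
      using Cons.prems False assms(2) by (intro Z_commute_op_word op_word_in_D) auto
    thus ?thesis using Cons False by simp
  qed (use Cons in simp)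
qed simp

lemma Y_X_pow_commutator:
  assumes i: "i \<in> {1..n}" and v: "v \<in> D"
  shows "Y i ((X i ^^ a) v) = (X i ^^ a) (Y i v) - (of_nat a * c i) *\<^sub>C (X i ^^ (a - 1)) v"
  using v
proof (induction a arbitrary: v)
  case (Suc a)
  have XY: "X i v \<in> D" "Y i v \<in> D" "X i (Y i v) \<in> D"
    using Suc.prems i X_invariant_linear Y_invariant_linear invariant_linear_on_imp_in by blast+
  have "Y i ((X i ^^ Suc a) v) = (X i ^^ a) (Y i (X i v)) - (of_nat a * c i) *\<^sub>C (X i ^^ (a - 1)) (X i v)"
    using Suc.IH XY by (simp add: funpow_swap1)
  also have "Y i (X i v) = X i (Y i v) - c i *\<^sub>C v"
    using comm_XYi i Suc.prems by (auto simp: algebra_simps)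
  also have "(X i ^^ a) (X i (Y i v) - c i *\<^sub>C v) = (X i ^^ Suc a) (Y i v) - c i *\<^sub>C (X i ^^ a) v"
    using invariant_linear_on_diff_scaleC[OF D_csubspace
        invariant_linear_on_funpow[OF X_invariant_linear[OF i]] XY(3) Suc.prems]
    by (simp add: funpow_swap1)
  also have "(of_nat a * c i) *\<^sub>C (X i ^^ (a - 1)) (X i v) = (of_nat a * c i) *\<^sub>C (X i ^^ a) v"
    by (cases a) (simp_all add: funpow_swap1)
  finally show ?case
    by (simp add: algebra_simps scaleC_add_left[symmetric])
qed simp


lemma op_word_snoc_Y:
  assumes i: "i \<in> {1..n}" and u: "u \<in> D" and w: "set w \<subseteq> {1..2 * n}"
  shows "op_word Z (w @ [i + n]) ((X i ^^ a) ((Y i ^^ b) u))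
           = op_word Z w ((X i ^^ a) ((Y i ^^ Suc b) u))
             - (of_nat a * c i) *\<^sub>C op_word Z w ((X i ^^ (a - 1)) ((Y i ^^ b) u))"
proof -
  have "op_word Z (w @ [i + n]) ((X i ^^ a) ((Y i ^^ b) u)) = op_word Z w (Y i ((X i ^^ a) ((Y i ^^ b) u)))"
    using i by (simp add: op_word_append)
  also have "Y i ((X i ^^ a) ((Y i ^^ b) u))
      = (X i ^^ a) ((Y i ^^ Suc b) u) - (of_nat a * c i) *\<^sub>C (X i ^^ (a - 1)) ((Y i ^^ b) u)"
    using Y_X_pow_commutator[OF i Y_pow_in_D[OF i u]] by simp
  also have "op_word Z w \<dots> = op_word Z w ((X i ^^ a) ((Y i ^^ Suc b) u))
      - (of_nat a * c i) *\<^sub>C op_word Z w ((X i ^^ (a - 1)) ((Y i ^^ b) u))"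
    by (intro invariant_linear_on_diff_scaleC[OF D_csubspace op_word_invariant_linear[OF w]]
        X_pow_in_D Y_pow_in_D i u)
  finally show ?thesis .
qed

lemma op_word_pair_bound:
  fixes \<phi> :: "'a \<Rightarrow> real" and N :: "nat \<Rightarrow> nat \<Rightarrow> real"
  assumes i: "i \<in> {1..n}" and u: "u \<in> D"
    and \<phi>: "\<And>v w r. v \<in> D \<Longrightarrow> w \<in> D \<Longrightarrow> \<phi> (v - r *\<^sub>C w) \<le> \<phi> v + cmod r * \<phi> w"
    and N: "\<And>a b. \<phi> ((X i ^^ a) ((Y i ^^ b) u)) \<le> N a b" "\<And>a b. N a b \<ge> 0"
    and w: "set w \<subseteq> {i, i + n}"
  shows "\<phi> (op_word Z w ((X i ^^ a) ((Y i ^^ b) u)))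
           \<le> commutator_sum (cmod (c i)) N (count_idx w (i + n)) (count_idx w i + a) (count_idx w (i + n) + b)"
  using w
proof (induction w arbitrary: a b rule: rev_induct)
  case Nil
  show ?case using N(1) by (simp add: commutator_sum_0)
next
  case (snoc l w)
  define \<alpha> where "\<alpha> = count_idx w i"
  define k where "k = count_idx w (i + n)"
  have ne: "i \<noteq> i + n" using i by auto
  have w2: "set w \<subseteq> {1..2 * n}" using snoc.prems i by auto
  have IH: "\<phi> (op_word Z w ((X i ^^ a') ((Y i ^^ b') u))) \<le> commutator_sum (cmod (c i)) N k (\<alpha> + a') (k + b')"
    for a' b' using snoc unfolding \<alpha>_def k_def by simp
  from snoc.prems consider "l = i" | "l = i + n" by auto
  thus ?case
  proof cases
    case 1
    hence "op_word Z (w @ [l]) ((X i ^^ a) ((Y i ^^ b) u)) = op_word Z w ((X i ^^ Suc a) ((Y i ^^ b) u))"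
      using i by (simp add: op_word_append)
    thus ?thesis using IH[of "Suc a" b] 1 ne by (simp add: count_idx_snoc \<alpha>_def k_def)
  next
    case 2
    define v1 where "v1 = (X i ^^ a) ((Y i ^^ Suc b) u)"
    define v2 where "v2 = (X i ^^ (a - 1)) ((Y i ^^ b) u)"
    have v12: "op_word Z w v1 \<in> D" "op_word Z w v2 \<in> D"
      unfolding v1_def v2_def by (intro op_word_in_D w2 X_pow_in_D Y_pow_in_D i u)+
    have "op_word Z (w @ [l]) ((X i ^^ a) ((Y i ^^ b) u)) = op_word Z w v1 - (of_nat a * c i) *\<^sub>C op_word Z w v2"
      unfolding v1_def v2_def 2 by (rule op_word_snoc_Y[OF i u w2])
    hence "\<phi> (op_word Z (w @ [l]) ((X i ^^ a) ((Y i ^^ b) u)))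
        \<le> \<phi> (op_word Z w v1) + real a * cmod (c i) * \<phi> (op_word Z w v2)"
      using \<phi>[OF v12, of "of_nat a * c i"] by (simp add: norm_mult)
    also have "\<dots> \<le> commutator_sum (cmod (c i)) N k (\<alpha> + a) (Suc k + b)
        + real a * cmod (c i) * commutator_sum (cmod (c i)) N k (\<alpha> + a - 1) (Suc k + b - 1)"
    proof (rule add_mono)
      show "\<phi> (op_word Z w v1) \<le> commutator_sum (cmod (c i)) N k (\<alpha> + a) (Suc k + b)"
        using IH[of a "Suc b"] by (simp add: v1_def)
      show "real a * cmod (c i) * \<phi> (op_word Z w v2)
          \<le> real a * cmod (c i) * commutator_sum (cmod (c i)) N k (\<alpha> + a - 1) (Suc k + b - 1)"
        using IH[of "a - 1" b] by (cases a) (simp_all add: v2_def mult_left_mono)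
    qed
    also have "\<dots> \<le> commutator_sum (cmod (c i)) N (Suc k) (\<alpha> + a) (Suc k + b)"
      using N(2) by (intro commutator_sum_step) auto
    finally show ?thesis using 2 ne by (simp add: count_idx_snoc \<alpha>_def k_def)
  qed
qed


lemma X_pow_abs_adjoint:
  assumes "i \<in> {1..n}"
  shows "abs_adjoint_on D (X i ^^ k) (X i ^^ k)"
proof -
  have "op_word Z (replicate k i) = X i ^^ k"
    using assms by (simp add: fun_eq_iff op_word_replicate)
  moreover have "abs_adjoint_on D (op_word Z (replicate k i)) (op_word Z (rev (replicate k i)))"
    using assms by (intro op_word_abs_adjoint) auto
  ultimately show ?thesis by simp
qed

lemma Y_pow_abs_adjoint:
  assumes "i \<in> {1..n}"
  shows "abs_adjoint_on D (Y i ^^ k) (Y i ^^ k)"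
proof -
  have "op_word Z (replicate k (i + n)) = Y i ^^ k"
    using assms by (simp add: fun_eq_iff op_word_replicate)
  moreover have "abs_adjoint_on D (op_word Z (replicate k (i + n))) (op_word Z (rev (replicate k (i + n))))"
    using assms by (intro op_word_abs_adjoint) auto
  ultimately show ?thesis by simp
qed

lemma norm_X_pow_Y_pow_square:
  assumes i: "i \<in> {1..n}" and u: "u \<in> D"
  shows "(norm ((X i ^^ a) ((Y i ^^ b) u)))\<^sup>2
           = cmod (cinner (op_word Z (replicate b (i + n) @ replicate (2 * a) i @ replicate b (i + n)) u) u)"
proof -
  define x where "x = (X i ^^ a) ((Y i ^^ b) u)"
  have yb: "(Y i ^^ b) u \<in> D" and x2: "(X i ^^ (2 * a)) ((Y i ^^ b) u) \<in> D"
    using i u by (simp_all add: X_pow_in_D Y_pow_in_D)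
  have "(norm x)\<^sup>2 = cmod (cinner x x)" by (simp add: cinner_self_eq_norm_square norm_power)
  also have "\<dots> = cmod (cinner ((Y i ^^ b) u) ((X i ^^ (2 * a)) ((Y i ^^ b) u)))"
    using X_pow_abs_adjoint[OF i, of a] yb X_pow_in_D[OF i yb]
    by (simp add: abs_adjoint_on_def x_def funpow_add mult_2 flip: funpow_add[of a a, unfolded comp_def])
  also have "\<dots> = cmod (cinner ((Y i ^^ b) ((X i ^^ (2 * a)) ((Y i ^^ b) u))) u)"
  proof -
    have "cmod (cinner ((Y i ^^ b) ((X i ^^ (2 * a)) ((Y i ^^ b) u))) u)
        = cmod (cinner ((X i ^^ (2 * a)) ((Y i ^^ b) u)) ((Y i ^^ b) u))"
      using Y_pow_abs_adjoint[OF i, of b] x2 u unfolding abs_adjoint_on_def by blast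
    thus ?thesis using norm_cinner_commute[of "(Y i ^^ b) u" "(X i ^^ (2 * a)) ((Y i ^^ b) u)"]
      by linarith
  qed
  finally show ?thesis using i by (simp add: x_def op_word_append op_word_replicate)
qed

context
  fixes i :: nat and u :: 'a and mm qq :: "nat \<Rightarrow> real" and H K C A :: real
  assumes i: "i \<in> {1..n}" and u: "u \<in> D"
    and mm: "\<And>k. mm k > 0" "cond_A0 mm" "cond_A1 mm" "cond_A2 H mm"
    and qq: "\<And>k. qq k > 0" "cond_A0 qq" "cond_A1 qq" "cond_A2 H qq"
    and K: "K \<ge> 1" "\<And>j. fact j * cmod (c i) ^ j \<le> K ^ j * mm j * qq j"
    and C: "C > 0" and A: "A \<ge> 1"
    and X_bound: "\<And>k. norm ((X i ^^ k) u) \<le> C * A ^ k * mm k"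
    and Y_bound: "\<And>k. norm ((Y i ^^ k) u) \<le> C * A ^ k * qq k"
begin

lemma norm_cinner_X_pow_Y_pow_le: "cmod (cinner ((X i ^^ a) ((Y i ^^ b) u)) u) \<le> C\<^sup>2 * A ^ (a + b) * mm a * qq b"
proof -
  have "cmod (cinner ((X i ^^ a) ((Y i ^^ b) u)) u) = cmod (cinner ((Y i ^^ b) u) ((X i ^^ a) u))"
    using X_pow_abs_adjoint[OF i] Y_pow_in_D[OF i u] u by (simp add: abs_adjoint_on_def)
  also have "\<dots> \<le> norm ((Y i ^^ b) u) * norm ((X i ^^ a) u)"
    by (rule Cauchy_Schwarz_cinner)
  also have "\<dots> \<le> (C * A ^ b * qq b) * (C * A ^ a * mm a)"
    by (rule mult_mono[OF Y_bound X_bound]) (use C A qq(1)[of b] in simp_all)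
  finally show ?thesis by (simp add: power_add power2_eq_square algebra_simps)
qed

lemma norm_X_pow_Y_pow_le: "norm ((X i ^^ a) ((Y i ^^ b) u)) \<le> C * (4 * K * A * H) ^ (a + b) * mm a * qq b"
proof -
  define w where "w = replicate b (i + n) @ replicate (2 * a) i @ replicate b (i + n)"
  have H: "H \<ge> 1" using cond_A2_ge_1 mm(2,4) by blast
  have "(norm ((X i ^^ a) ((Y i ^^ b) u)))\<^sup>2 = cmod (cinner (op_word Z w ((X i ^^ 0) ((Y i ^^ 0) u))) u)"
    unfolding w_def using norm_X_pow_Y_pow_square[OF i u] by simp
  also have "\<dots> \<le> commutator_sum (cmod (c i)) (\<lambda>a b. cmod (cinner ((X i ^^ a) ((Y i ^^ b) u)) u))
      (2 * b) (2 * a) (2 * b)"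
  proof -
    have "set w \<subseteq> {i, i + n}" by (auto simp: w_def)
    from op_word_pair_bound[where \<phi> = "\<lambda>v. cmod (cinner v u)" and a = 0 and b = 0,
        OF i u norm_cinner_diff_scaleC_le order_refl norm_ge_zero this]
    show ?thesis using i by (simp add: w_def count_idx_append count_idx_replicate mult_2)
  qed
  also have "\<dots> \<le> C\<^sup>2 * (4 * K * A) ^ (2 * a + 2 * b) * mm (2 * a) * qq (2 * b)"
    using cond_A1_mult_le[OF mm(1-3)] cond_A1_mult_le[OF qq(1-3)] norm_cinner_X_pow_Y_pow_le
    by (intro commutator_sum_le mm(1) qq(1) K A) auto
  also have "\<dots> \<le> C\<^sup>2 * (4 * K * A) ^ (2 * a + 2 * b) * (H ^ (2 * a) * (mm a)\<^sup>2) * (H ^ (2 * b) * (qq b)\<^sup>2)"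
  proof (rule mult_mono[OF mult_left_mono[OF cond_A2_double[OF mm(4)]] cond_A2_double[OF qq(4)]])
    show "0 \<le> C\<^sup>2 * (4 * K * A) ^ (2 * a + 2 * b)" using K A by simp
    show "0 \<le> C\<^sup>2 * (4 * K * A) ^ (2 * a + 2 * b) * (H ^ (2 * a) * (mm a)\<^sup>2)" using K A H by simp
    show "0 \<le> qq (2 * b)" using qq(1) less_imp_le by blast
  qed
  also have "\<dots> = (C * (4 * K * A * H) ^ (a + b) * mm a * qq b)\<^sup>2"
  proof -
    have "(4 * K * A) ^ (2 * a + 2 * b) * (H ^ (2 * a) * H ^ (2 * b)) = ((4 * K * A * H) ^ (a + b))\<^sup>2"
      by (simp add: power_add[symmetric] power_mult_distrib[symmetric] power_mult[symmetric]
          add_mult_distrib2[symmetric] mult.commute[of 2])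
    thus ?thesis by (simp add: power_mult_distrib mult_ac)
  qed
  finally have "(norm ((X i ^^ a) ((Y i ^^ b) u)))\<^sup>2 \<le> (C * (4 * K * A * H) ^ (a + b) * mm a * qq b)\<^sup>2" .
  moreover have "0 \<le> C * (4 * K * A * H) ^ (a + b) * mm a * qq b"
    using C K A H mm(1)[of a] qq(1)[of b] by simp
  ultimately show ?thesis by (rule power2_le_imp_le)
qed

lemma norm_op_word_pair_le:
  assumes w: "set w \<subseteq> {i, i + n}"
  shows "norm (op_word Z w u) \<le> C * (4 * K * (4 * K * A * H)) ^ length w * mm (count_idx w i) * qq (count_idx w (i + n))"
proof -
  have H: "H \<ge> 1" using cond_A2_ge_1 mm(2,4) by blast
  have "1 * 1 * 1 \<le> K * A * H" using K A H by (intro mult_mono) auto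
  hence E: "1 \<le> 4 * K * A * H" by (simp add: mult.assoc)
  have "norm (op_word Z w ((X i ^^ 0) ((Y i ^^ 0) u)))
      \<le> commutator_sum (cmod (c i)) (\<lambda>a b. norm ((X i ^^ a) ((Y i ^^ b) u)))
           (count_idx w (i + n)) (count_idx w i) (count_idx w (i + n))"
    using op_word_pair_bound[where \<phi> = norm and a = 0 and b = 0,
        OF i u norm_diff_scaleC_le order_refl norm_ge_zero w] by simp
  also have "\<dots> \<le> C * (4 * K * (4 * K * A * H)) ^ (count_idx w i + count_idx w (i + n))
      * mm (count_idx w i) * qq (count_idx w (i + n))"
    using cond_A1_mult_le[OF mm(1-3)] cond_A1_mult_le[OF qq(1-3)] norm_X_pow_Y_pow_le C E
    by (intro commutator_sum_le mm(1) qq(1) K) auto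
  also have "count_idx w i + count_idx w (i + n) = length w"
    using sum_count_idx[of "{i, i + n}" w] w i by simp
  finally show ?thesis by simp
qed

end


lemma norm_op_word_square_le:
  assumes w: "set w \<subseteq> {1..2 * n}" and u: "u \<in> D"
    and P: "P = filter (\<lambda>l. pair_of l = i) w" and Q: "Q = filter (\<lambda>l. pair_of l \<noteq> i) w"
  shows "(norm (op_word Z w u))\<^sup>2 \<le> norm (op_word Z (rev P @ P) u) * norm (op_word Z (rev Q @ Q) u)"
proof -
  have P2: "set P \<subseteq> {1..2 * n}" and Q2: "set Q \<subseteq> {1..2 * n}" using w P Q by auto
  define y where "y = op_word Z Q u"
  define x where "x = op_word Z P y"
  define z where "z = op_word Z (rev P @ P) u"
  have yD: "y \<in> D" and xD: "x \<in> D" and zD: "z \<in> D"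
    unfolding x_def y_def z_def using P2 Q2 u by (auto intro!: op_word_in_D)
  have "(norm (op_word Z w u))\<^sup>2 = cmod (cinner x x)"
    using op_word_filter_pair[OF w u, of i] by (simp add: cinner_self_eq_norm_square norm_power x_def y_def P Q)
  also have "\<dots> = cmod (cinner y (op_word Z (rev P) x))"
    using op_word_abs_adjoint[OF P2] yD xD unfolding abs_adjoint_on_def x_def by blast
  also have "op_word Z (rev P) x = op_word Z Q z"
  proof -
    have "op_word Z (rev P) x = op_word Z (rev P @ P) (op_word Z Q u)"
      by (simp add: x_def y_def op_word_append)
    also have "\<dots> = op_word Z Q z"
      unfolding z_def by (rule op_word_commute[OF _ Q2 _ u]) (use P2 in \<open>auto simp: P Q\<close>)
    finally show ?thesis .
  qed
  also have "cmod (cinner y (op_word Z Q z)) = cmod (cinner z (op_word Z (rev Q) y))"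
    using op_word_abs_adjoint[OF Q2] yD zD norm_cinner_commute unfolding abs_adjoint_on_def by metis
  also have "\<dots> \<le> norm z * norm (op_word Z (rev Q @ Q) u)"
    using Cauchy_Schwarz_cinner by (simp add: y_def op_word_append)
  finally show ?thesis by (simp add: z_def)
qed


lemma pair_of_eq: "l \<in> {1..2 * n} \<Longrightarrow> pair_of l = i \<Longrightarrow> l \<in> {i, i + n}"
  unfolding pair_of_def by (cases "l \<le> n") auto

lemma op_word_bound_insert_pair:
  fixes p :: "nat \<Rightarrow> nat \<Rightarrow> real"
  assumes u: "u \<in> D"
    and p0: "\<forall>l\<in>{1..2 * n}. p l 0 = 1" and pos: "\<forall>l\<in>{1..2 * n}. \<forall>k. p l k > 0"
    and A2: "\<forall>l\<in>{1..2 * n}. cond_A2 H (p l)" and H: "H > 0"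
    and C: "C1 > 0" "C2 > 0" and B: "B1 > 0" "B2 > 0"
    and bound1: "\<And>w. set w \<subseteq> {i, i + n} \<Longrightarrow> norm (op_word Z w u) \<le> C1 * B1 ^ length w * p_word (2 * n) p w"
    and bound2: "\<And>w. set w \<subseteq> {l\<in>{1..2 * n}. pair_of l \<in> S} \<Longrightarrow>
                   norm (op_word Z w u) \<le> C2 * B2 ^ length w * p_word (2 * n) p w"
    and w: "set w \<subseteq> {l\<in>{1..2 * n}. pair_of l \<in> insert i S}"
  shows "norm (op_word Z w u) \<le> max C1 C2 * (max B1 B2 * H) ^ length w * p_word (2 * n) p w"
proof -
  define P where "P = filter (\<lambda>l. pair_of l = i) w"
  define Q where "Q = filter (\<lambda>l. pair_of l \<noteq> i) w"
  define B where "B = max B1 B2 * H"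
  have B_pos: "B > 0" unfolding B_def using B H by simp
  have w2: "set w \<subseteq> {1..2 * n}" and P2: "set P \<subseteq> {1..2 * n}" and Q2: "set Q \<subseteq> {1..2 * n}"
    using w by (auto simp: P_def Q_def)
  have "set (rev P @ P) \<subseteq> {i, i + n}"
  proof
    fix l assume "l \<in> set (rev P @ P)"
    hence "l \<in> set w" "pair_of l = i" by (auto simp: P_def)
    thus "l \<in> {i, i + n}" using w2 pair_of_eq by blast
  qed
  hence zP: "norm (op_word Z (rev P @ P) u) \<le> C1 * ((B1 * H) ^ length P * p_word (2 * n) p P)\<^sup>2"
    using C B by (intro p_word_rev_append_bound[OF pos A2 P2] bound1) auto
  have "set (rev Q @ Q) \<subseteq> {l\<in>{1..2 * n}. pair_of l \<in> S}" using w by (auto simp: Q_def)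
  hence zQ: "norm (op_word Z (rev Q @ Q) u) \<le> C2 * ((B2 * H) ^ length Q * p_word (2 * n) p Q)\<^sup>2"
    using C B by (intro p_word_rev_append_bound[OF pos A2 Q2] bound2) auto
  have pP: "p_word (2 * n) p P > 0" and pQ: "p_word (2 * n) p Q > 0" using p_word_pos[OF pos] by auto
  have BH: "B1 * H \<le> B" "B2 * H \<le> B" using B H by (auto simp: B_def intro: mult_right_mono)
  have "norm (op_word Z w u) \<le> max C1 C2 * (B ^ length P * p_word (2 * n) p P * (B ^ length Q * p_word (2 * n) p Q))"
  proof (rule le_of_square_le_mult[OF norm_op_word_square_le[OF w2 u P_def Q_def] _ _ zP zQ C])
    show "(B1 * H) ^ length P * p_word (2 * n) p P \<le> B ^ length P * p_word (2 * n) p P"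
      using BH B H pP by (intro mult_right_mono power_mono) auto
    show "(B2 * H) ^ length Q * p_word (2 * n) p Q \<le> B ^ length Q * p_word (2 * n) p Q"
      using BH B H pQ by (intro mult_right_mono power_mono) auto
  qed (use B H pP pQ in auto)
  also have "\<dots> = max C1 C2 * B ^ length w * p_word (2 * n) p w"
  proof -
    have "length w = length P + length Q" unfolding P_def Q_def by (rule sum_length_filter_compl[symmetric])
    moreover have "p_word (2 * n) p w = p_word (2 * n) p P * p_word (2 * n) p Q"
      unfolding P_def Q_def by (rule p_word_filter[of "2 * n" p, OF p0])
    ultimately show ?thesis by (simp add: power_add mult_ac)
  qed
  finally show ?thesis unfolding B_def .
qed

lemma op_word_bound_from_pairs:
  fixes p :: "nat \<Rightarrow> nat \<Rightarrow> real"
  assumes u: "u \<in> D" and S: "S \<subseteq> {1..n}"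
    and p0: "\<forall>l\<in>{1..2 * n}. p l 0 = 1" and pos: "\<forall>l\<in>{1..2 * n}. \<forall>k. p l k > 0"
    and A2: "\<forall>l\<in>{1..2 * n}. cond_A2 H (p l)" and H: "H > 0"
    and pairs: "\<forall>i\<in>S. \<exists>C>0. \<exists>B>0. \<forall>w. set w \<subseteq> {i, i + n} \<longrightarrow>
                  norm (op_word Z w u) \<le> C * B ^ length w * p_word (2 * n) p w"
  shows "\<exists>C>0. \<exists>B>0. \<forall>w. set w \<subseteq> {l\<in>{1..2 * n}. pair_of l \<in> S} \<longrightarrow>
           norm (op_word Z w u) \<le> C * B ^ length w * p_word (2 * n) p w"
proof -
  have "finite S" using S finite_subset by blast
  thus ?thesis using S pairs
  proof (induction S rule: finite_induct)
    case empty
    have "\<forall>w. set w \<subseteq> {l\<in>{1..2 * n}. pair_of l \<in> {}} \<longrightarrow>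
        norm (op_word Z w u) \<le> (norm u + 1) * 1 ^ length w * p_word (2 * n) p w"
      using p_word_Nil[of "2 * n" p, OF p0] by simp
    moreover have "norm u + 1 > 0" "(1::real) > 0" by (simp_all add: add_nonneg_pos)
    ultimately show ?case by blast
  next
    case (insert i S)
    obtain C1 B1 where "C1 > 0" "B1 > 0" and "\<forall>w. set w \<subseteq> {i, i + n} \<longrightarrow>
        norm (op_word Z w u) \<le> C1 * B1 ^ length w * p_word (2 * n) p w"
      using insert.prems by auto
    moreover obtain C2 B2 where "C2 > 0" "B2 > 0" and "\<forall>w. set w \<subseteq> {l\<in>{1..2 * n}. pair_of l \<in> S} \<longrightarrow>
        norm (op_word Z w u) \<le> C2 * B2 ^ length w * p_word (2 * n) p w"
      using insert.IH insert.prems by auto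
    ultimately have "\<forall>w. set w \<subseteq> {l\<in>{1..2 * n}. pair_of l \<in> insert i S} \<longrightarrow>
        norm (op_word Z w u) \<le> max C1 C2 * (max B1 B2 * H) ^ length w * p_word (2 * n) p w"
      using op_word_bound_insert_pair[OF u p0 pos A2 H] by blast
    moreover have "max C1 C2 > 0" "max B1 B2 * H > 0" using \<open>C1 > 0\<close> \<open>B1 > 0\<close> H by auto
    ultimately show ?case by blast
  qed
qed


lemma op_word_pair_bound_from_S_single:
  fixes m q :: "nat \<Rightarrow> nat \<Rightarrow> real"
  assumes i: "i \<in> {1..n}" and u: "u \<in> D"
    and p0: "\<forall>l\<in>{1..2 * n}. join_tuple n m q l 0 = 1"
    and m: "\<And>k. m i k > 0" "cond_A0 (m i)" "cond_A1 (m i)" "cond_A2 H (m i)"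
    and q: "\<And>k. q i k > 0" "cond_A0 (q i)" "cond_A1 (q i)" "cond_A2 H (q i)"
    and A3: "cond_A3 (m i) (q i)"
    and hX: "u \<in> S_single (DX i) (X i) (m i)" and hY: "u \<in> S_single (DY i) (Y i) (q i)"
  shows "\<exists>C>0. \<exists>B>0. \<forall>w. set w \<subseteq> {i, i + n} \<longrightarrow>
           norm (op_word Z w u) \<le> C * B ^ length w * p_word (2 * n) (join_tuple n m q) w"
proof -
  have m0: "m i 0 = 1" and q0: "q i 0 = 1" using m(2) q(2) by (simp_all add: cond_A0_def)
  obtain C1 A1 where CA1: "C1 > 0" "A1 \<ge> 1" and bX: "\<And>k. norm ((X i ^^ k) u) \<le> C1 * A1 ^ k * m i k"
    using S_single_bound[OF hX m0 m(1)] by blast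
  obtain C2 A2 where CA2: "C2 > 0" "A2 \<ge> 1" and bY: "\<And>k. norm ((Y i ^^ k) u) \<le> C2 * A2 ^ k * q i k"
    using S_single_bound[OF hY q0 q(1)] by blast
  obtain K where K: "K \<ge> 1" "\<And>j. fact j * cmod (c i) ^ j \<le> K ^ j * m i j * q i j"
    using cond_A3_fact_le[OF m(1) q(1) m(2) q(2) A3 norm_ge_zero] by blast
  define C where "C = max C1 C2"
  define A where "A = max A1 A2"
  have C: "C > 0" and A: "A \<ge> 1" using CA1 CA2 by (auto simp: C_def A_def)
  have bXA: "norm ((X i ^^ k) u) \<le> C * A ^ k * m i k" for k
    by (rule le_mult_power_mono[OF bX]) (use CA1 m(1)[of k] in \<open>auto simp: C_def A_def\<close>)
  have bYA: "norm ((Y i ^^ k) u) \<le> C * A ^ k * q i k" for k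
    by (rule le_mult_power_mono[OF bY]) (use CA2 q(1)[of k] in \<open>auto simp: C_def A_def\<close>)
  have "norm (op_word Z w u) \<le> C * (4 * K * (4 * K * A * H)) ^ length w * p_word (2 * n) (join_tuple n m q) w"
    if w: "set w \<subseteq> {i, i + n}" for w
  proof -
    have "p_word (2 * n) (join_tuple n m q) w = m i (count_idx w i) * q i (count_idx w (i + n))"
      using p_word_two_letters[of "2 * n" "join_tuple n m q" i "i + n" w] p0 i w by simp
    thus ?thesis using norm_op_word_pair_le[OF i u m q K C A bXA bYA w] by (simp only: mult.assoc)
  qed
  moreover have "4 * K * (4 * K * A * H) > 0"
    using K A cond_A2_ge_1[OF m(4) m(2)] by simp
  ultimately show ?thesis using C by blast
qed


lemma D_subset_join_domain:
  assumes "l \<in> {1..2 * n}"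
  shows "D \<subseteq> join_tuple n DX DY l \<and> Z l ` D \<subseteq> D"
proof (cases "l \<le> n")
  case True
  thus ?thesis using assms dom(1) by (auto simp: common_invariant_domain_def)
next
  case False
  hence "l - n \<in> {1..n}" using assms by auto
  thus ?thesis using False dom(2) by (auto simp: common_invariant_domain_def join_tuple_def)
qed

lemma S_single_imp_S_class_join:
  fixes m q :: "nat \<Rightarrow> nat \<Rightarrow> real" and H :: real
  assumes pos: "\<forall>i\<in>{1..n}. \<forall>k. m i k > 0 \<and> q i k > 0"
    and A0: "\<forall>i\<in>{1..n}. cond_A0 (m i) \<and> cond_A0 (q i)"
    and A1: "\<forall>i\<in>{1..n}. cond_A1 (m i) \<and> cond_A1 (q i)"
    and H: "H > 0" "\<forall>i\<in>{1..n}. cond_A2 H (m i) \<and> cond_A2 H (q i)"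
    and A3: "\<forall>i\<in>{1..n}. cond_A3 (m i) (q i)"
    and u: "u \<in> D"
    and hX: "\<forall>i\<in>{1..n}. u \<in> S_single (DX i) (X i) (m i)"
    and hY: "\<forall>i\<in>{1..n}. u \<in> S_single (DY i) (Y i) (q i)"
  shows "u \<in> S_class (2 * n) (join_tuple n DX DY) (join_tuple n X Y) (join_tuple n m q)"
proof -
  have "\<forall>i\<in>{1..n}. m i 0 = 1 \<and> q i 0 = 1" using A0 by (simp add: cond_A0_def)
  hence p0: "\<forall>l\<in>{1..2 * n}. join_tuple n m q l 0 = 1"
    using join_tuple_all[where P = "\<lambda>f. f 0 = 1"] by blast
  have "\<forall>i\<in>{1..n}. (\<forall>k. m i k > 0) \<and> (\<forall>k. q i k > 0)" using pos by blast
  hence p_pos: "\<forall>l\<in>{1..2 * n}. \<forall>k. join_tuple n m q l k > 0"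
    using join_tuple_all[where P = "\<lambda>f. \<forall>k. f k > 0"] by blast
  have p_A2: "\<forall>l\<in>{1..2 * n}. cond_A2 H (join_tuple n m q l)"
    using H(2) join_tuple_all[where P = "cond_A2 H"] by blast
  have "\<forall>i\<in>{1..n}. \<exists>C>0. \<exists>B>0. \<forall>w. set w \<subseteq> {i, i + n} \<longrightarrow>
      norm (op_word Z w u) \<le> C * B ^ length w * p_word (2 * n) (join_tuple n m q) w"
    using pos A0 A1 H(2) A3 hX hY by (auto intro!: op_word_pair_bound_from_S_single[OF _ u p0])
  from op_word_bound_from_pairs[OF u order_refl p0 p_pos p_A2 H(1) this]
  obtain C B where "C > 0" "B > 0" and bound: "\<forall>w. set w \<subseteq> {l\<in>{1..2 * n}. pair_of l \<in> {1..n}} \<longrightarrow>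
      norm (op_word Z w u) \<le> C * B ^ length w * p_word (2 * n) (join_tuple n m q) w"
    by blast
  have "{l\<in>{1..2 * n}. pair_of l \<in> {1..n}} = {1..2 * n}" by (auto simp: pair_of_def)
  hence "\<forall>\<alpha>\<in>multi_indices (2 * n).
      norm (op_word Z \<alpha> u) \<le> C * B ^ length \<alpha> * p_word (2 * n) (join_tuple n m q) \<alpha>"
    using bound by (simp add: multi_indices_def)
  moreover have "in_dom_word (join_tuple n DX DY) Z \<alpha> u" if "set \<alpha> \<subseteq> {1..2 * n}" for \<alpha>
    using in_dom_word_invariant[of \<alpha> D "join_tuple n DX DY" Z u] D_subset_join_domain that u by blast
  hence "u \<in> C_infty (2 * n) (join_tuple n DX DY) (join_tuple n X Y)"
    unfolding C_infty_def multi_indices_def by blast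
  ultimately show ?thesis using \<open>C > 0\<close> \<open>B > 0\<close> unfolding S_class_def by blast
qed

end

theorem corollary2p7:
  fixes n :: nat
    and D :: "'a::chilbert_space set"
    and DX DY :: "nat \<Rightarrow> 'a set"
    and X Y :: "nat \<Rightarrow> 'a \<Rightarrow> 'a"
    and c :: "nat \<Rightarrow> complex"
    and m q :: "nat \<Rightarrow> nat \<Rightarrow> real"
    and H :: real
    and u :: 'a
  assumes ops: "\<forall>i\<in>{1..n}. lin_op (DX i) (X i) \<and> lin_op (DY i) (Y i)"
    and herm: "\<forall>i\<in>{1..n}. (hermitian (DX i) (X i) \<or> skew_hermitian (DX i) (X i))
                          \<and> (hermitian (DY i) (Y i) \<or> skew_hermitian (DY i) (Y i))"
    and dom: "common_invariant_domain D {1..n} DX X"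
             "common_invariant_domain D {1..n} DY Y"
    and comm_XX: "\<forall>i\<in>{1..n}. \<forall>j\<in>{1..n}. \<forall>v\<in>D. X i (X j v) = X j (X i v)"
    and comm_YY: "\<forall>i\<in>{1..n}. \<forall>j\<in>{1..n}. \<forall>v\<in>D. Y i (Y j v) = Y j (Y i v)"
    and comm_XY: "\<forall>i\<in>{1..n}. \<forall>j\<in>{1..n}. i \<noteq> j \<longrightarrow> (\<forall>v\<in>D. X i (Y j v) = Y j (X i v))"
    and comm_XYi: "\<forall>i\<in>{1..n}. c i \<noteq> 0 \<and> (\<forall>v\<in>D. X i (Y i v) - Y i (X i v) = c i *\<^sub>C v)"
    and pos: "\<forall>i\<in>{1..n}. \<forall>k. m i k > 0 \<and> q i k > 0"
    and A0: "\<forall>i\<in>{1..n}. cond_A0 (m i) \<and> cond_A0 (q i)"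
    and A1: "\<forall>i\<in>{1..n}. cond_A1 (m i) \<and> cond_A1 (q i)"
    and H: "H > 0" "\<forall>i\<in>{1..n}. cond_A2 H (m i) \<and> cond_A2 H (q i)"
    and A3: "\<forall>i\<in>{1..n}. cond_A3 (m i) (q i)"
    and u: "u \<in> D"
  shows "(u \<in> S_class (2 * n) (join_tuple n DX DY) (join_tuple n X Y) (join_tuple n m q)
            \<longleftrightarrow> u \<in> S_class n DX X m \<inter> S_class n DY Y q)
       \<and> (u \<in> S_class n DX X m \<inter> S_class n DY Y q
            \<longleftrightarrow> u \<in> (\<Inter>i\<in>{1..n}. S_single (DX i) (X i) (m i)) \<inter> (\<Inter>i\<in>{1..n}. S_single (DY i) (Y i) (q i)))"
proof -
  have ccr: "ccr_system n D DX DY X Y c"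
    using ops herm dom comm_XX comm_YY comm_XY comm_XYi by (simp add: ccr_system_def)
  have m0: "\<forall>i\<in>{1..n}. m i 0 = 1" and q0: "\<forall>i\<in>{1..n}. q i 0 = 1"
    using A0 by (simp_all add: cond_A0_def)
  have "S_class (2 * n) (join_tuple n DX DY) (join_tuple n X Y) (join_tuple n m q)
      \<subseteq> S_class n DX X m \<inter> S_class n DY Y q"
    using S_class_join_subset_left[of n q, OF q0] S_class_join_subset_right[of n m, OF m0] by blast
  moreover have "S_class n DX X m \<inter> S_class n DY Y q
      \<subseteq> (\<Inter>i\<in>{1..n}. S_single (DX i) (X i) (m i)) \<inter> (\<Inter>i\<in>{1..n}. S_single (DY i) (Y i) (q i))"
    using S_class_subset_S_single[of n m, OF m0] S_class_subset_S_single[of n q, OF q0] by blast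
  moreover have "u \<in> (\<Inter>i\<in>{1..n}. S_single (DX i) (X i) (m i)) \<inter> (\<Inter>i\<in>{1..n}. S_single (DY i) (Y i) (q i))
      \<Longrightarrow> u \<in> S_class (2 * n) (join_tuple n DX DY) (join_tuple n X Y) (join_tuple n m q)"
    using ccr_system.S_single_imp_S_class_join[OF ccr pos A0 A1 H A3 u] by blast
  ultimately show ?thesis by blast
qed

end
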